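(* Let $\mathcal{S},\mathcal{A}$ be finite and let $\mathcal{M}$ be the class of all transition kernels $\mathcal{S}\times\mathcal{A}\to\Delta(\mathcal{S})$ (so the MLE is the empirical transition distribution). There exist universal constants $c_1,\dots,c_4$ such that, running CPPO with $\xi=c_1\frac{|\mathcal{S}|^2|\mathcal{A}|\ln(n|\mathcal{S}||\mathcal{A}|c_2/\delta)}{n}$, for any $\pi^*\in\Pi$ with $C_{\pi^*,P^\star}<\infty$, with probability at least $1-\delta$, $$V^{\pi^*}_{P^\star}-V^{\hat\pi}_{P^\star}\le c_3H^2\sqrt{\frac{C_{\pi^*,P^\star}|\mathcal{S}|^2|\mathcal{A}|\ln(n|\mathcal{S}||\mathcal{A}|c_4/\delta)}{n}}.$$
   Context: Episodic finite-horizon MDP with horizon $H$, reward $r\in[0,1]$, initial distribution $d_0$, unknown true transition $P^\star$. $V^\pi_P$ is the expected cumulative $H$-step reward of Markov policy $\pi$ under transition $P$; $d^\pi_P=\frac1H\sum_{t=0}^{H-1}d^\pi_{P,t}$ with $d^\pi_{P,t}$ the law of $(s_t,a_t)$. $\Pi$ is the class of all Markov policies. Data $\mathcal{D}=\{(s_i,a_i,s_i')\}_{i=1}^n$ i.i.d., $(s_i,a_i)\sim\rho$, $s_i'\sim P^\star(\cdot|s_i,a_i)$; $\mathbb{E}_{\mathcal{D}}$ is the empirical average. CPPO: $\hat P_{\mathrm{MLE}}=\arg\max_{P\in\mathcal{M}}\mathbb{E}_{\mathcal{D}}[\ln P(s'|s,a)]$, $\mathcal{M}_{\mathcal{D}}=\{P\in\mathcal{M}:\mathbb{E}_{\mathcal{D}}\|P(\cdot|s,a)-\hat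 P_{\mathrm{MLE}}(\cdot|s,a)\|_1^2\le\xi\}$, $\hat\pi=\arg\max_{\pi\in\Pi}\min_{P\in\mathcal{M}_{\mathcal{D}}}V^\pi_P$. Density-ratio concentrability: $C_{\pi^*,P^\star}=\max_{(s,a)}d^{\pi^*}_{P^\star}(s,a)/\rho(s,a)$. *)

theory Defs
  imports "HOL-Probability.Probability"
begin

(* Finite MDP encoded with state set {..<nS} and action set {..<nA} (nat carriers),
   so that the universal constants can be quantified before the sizes. *)

definition is_kernel :: "nat \<Rightarrow> nat \<Rightarrow> (nat \<Rightarrow> nat \<Rightarrow> nat pmf) \<Rightarrow> bool" where
  "is_kernel nS nA P \<longleftrightarrow> (\<forall>s a. s < nS \<longrightarrow> a < nA \<longrightarrow> set_pmf (P s a) \<subseteq> {..<nS})"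

definition is_policy :: "nat \<Rightarrow> nat \<Rightarrow> (nat \<Rightarrow> nat \<Rightarrow> nat pmf) \<Rightarrow> bool" where
  "is_policy nS nA pol \<longleftrightarrow> (\<forall>t s. s < nS \<longrightarrow> set_pmf (pol t s) \<subseteq> {..<nA})"

primrec state_dist :: "nat pmf \<Rightarrow> (nat \<Rightarrow> nat \<Rightarrow> nat pmf) \<Rightarrow> (nat \<Rightarrow> nat \<Rightarrow> nat pmf) \<Rightarrow> nat \<Rightarrow> nat pmf" where
  "state_dist d0 P pol 0 = d0"
| "state_dist d0 P pol (Suc t) =
     bind_pmf (state_dist d0 P pol t) (\<lambda>s. bind_pmf (pol t s) (\<lambda>a. P s a))"

definition sa_dist :: "nat pmf \<Rightarrow> (nat \<Rightarrow> nat \<Rightarrow> nat pmf) \<Rightarrow> (nat \<Rightarrow> nat \<Rightarrow> nat pmf) \<Rightarrow> nat \<Rightarrow> (nat \<times> nat) pmf" where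
  "sa_dist d0 P pol t = bind_pmf (state_dist d0 P pol t) (\<lambda>s. map_pmf (\<lambda>a. (s, a)) (pol t s))"

definition value_fn :: "nat \<Rightarrow> (nat \<Rightarrow> nat \<Rightarrow> real) \<Rightarrow> nat pmf \<Rightarrow> (nat \<Rightarrow> nat \<Rightarrow> nat pmf) \<Rightarrow> (nat \<Rightarrow> nat \<Rightarrow> nat pmf) \<Rightarrow> real" where
  "value_fn H r d0 P pol = (\<Sum>t<H. measure_pmf.expectation (sa_dist d0 P pol t) (\<lambda>(s, a). r s a))"

definition occupancy :: "nat \<Rightarrow> nat pmf \<Rightarrow> (nat \<Rightarrow> nat \<Rightarrow> nat pmf) \<Rightarrow> (nat \<Rightarrow> nat \<Rightarrow> nat pmf) \<Rightarrow> nat \<times> nat \<Rightarrow> real" where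
  "occupancy H d0 P pol sa = (1 / real H) * (\<Sum>t<H. pmf (sa_dist d0 P pol t) sa)"

(* C_{pol,P} = max_{(s,a)} d^pi_P(s,a) / rho(s,a)  (finiteness assumed separately) *)
definition concentrability :: "nat \<Rightarrow> nat \<Rightarrow> nat \<Rightarrow> nat pmf \<Rightarrow> (nat \<Rightarrow> nat \<Rightarrow> nat pmf) \<Rightarrow> (nat \<Rightarrow> nat \<Rightarrow> nat pmf) \<Rightarrow> (nat \<times> nat) pmf \<Rightarrow> real" where
  "concentrability nS nA H d0 P pol rho =
     Max ((\<lambda>sa. occupancy H d0 P pol sa / pmf rho sa) ` ({..<nS} \<times> {..<nA}))"

definition sample_pmf :: "(nat \<times> nat) pmf \<Rightarrow> (nat \<Rightarrow> nat \<Rightarrow> nat pmf) \<Rightarrow> (nat \<times> nat \<times> nat) pmf" where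
  "sample_pmf rho Pstar = bind_pmf rho (\<lambda>(s, a). map_pmf (\<lambda>s'. (s, a, s')) (Pstar s a))"

definition data_pmf :: "nat \<Rightarrow> (nat \<times> nat) pmf \<Rightarrow> (nat \<Rightarrow> nat \<Rightarrow> nat pmf) \<Rightarrow> (nat \<Rightarrow> nat \<times> nat \<times> nat) pmf" where
  "data_pmf n rho Pstar = Pi_pmf {..<n} (0, 0, 0) (\<lambda>_. sample_pmf rho Pstar)"

definition emp_avg :: "nat \<Rightarrow> (nat \<Rightarrow> nat \<times> nat \<times> nat) \<Rightarrow> (nat \<times> nat \<times> nat \<Rightarrow> real) \<Rightarrow> real" where
  "emp_avg n D f = (\<Sum>i<n. f (D i)) / real n"

(* MLE over the class M of all kernels: maximiser of the likelihood prod_i P(s'_i|s_i,a_i),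
   equivalently of E_D[ln P(s'|s,a)] (with ln 0 = -infinity) *)
definition is_mle :: "nat \<Rightarrow> nat \<Rightarrow> nat \<Rightarrow> (nat \<Rightarrow> nat \<times> nat \<times> nat) \<Rightarrow> (nat \<Rightarrow> nat \<Rightarrow> nat pmf) \<Rightarrow> bool" where
  "is_mle nS nA n D Phat \<longleftrightarrow> is_kernel nS nA Phat \<and>
     (\<forall>P. is_kernel nS nA P \<longrightarrow>
        (\<Prod>i<n. pmf (P (fst (D i)) (fst (snd (D i)))) (snd (snd (D i))))
        \<le> (\<Prod>i<n. pmf (Phat (fst (D i)) (fst (snd (D i)))) (snd (snd (D i)))))"

definition l1_dist :: "nat \<Rightarrow> nat pmf \<Rightarrow> nat pmf \<Rightarrow> real" where
  "l1_dist nS p q = (\<Sum>s'<nS. \<bar>pmf p s' - pmf q s'\<bar>)"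

definition version_space :: "nat \<Rightarrow> nat \<Rightarrow> nat \<Rightarrow> (nat \<Rightarrow> nat \<times> nat \<times> nat) \<Rightarrow> (nat \<Rightarrow> nat \<Rightarrow> nat pmf) \<Rightarrow> real \<Rightarrow> (nat \<Rightarrow> nat \<Rightarrow> nat pmf) set" where
  "version_space nS nA n D Phat xi =
     {P. is_kernel nS nA P \<and>
         emp_avg n D (\<lambda>(s, a, s'). (l1_dist nS (P s a) (Phat s a))\<^sup>2) \<le> xi}"

definition is_cppo_output :: "nat \<Rightarrow> nat \<Rightarrow> nat \<Rightarrow> (nat \<Rightarrow> nat \<Rightarrow> real) \<Rightarrow> nat pmf \<Rightarrow> nat \<Rightarrow> (nat \<Rightarrow> nat \<times> nat \<times> nat) \<Rightarrow> real \<Rightarrow> (nat \<Rightarrow> nat \<Rightarrow> nat pmf) \<Rightarrow> bool" where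
  "is_cppo_output nS nA H r d0 n D xi polhat \<longleftrightarrow>
     (\<exists>Phat. is_mle nS nA n D Phat \<and> is_policy nS nA polhat \<and>
        (\<forall>pol. is_policy nS nA pol \<longrightarrow>
           (INF P\<in>version_space nS nA n D Phat xi. value_fn H r d0 P pol)
           \<le> (INF P\<in>version_space nS nA n D Phat xi. value_fn H r d0 P polhat)))"

end

theory Submission
  imports Defs "HOL-Analysis.Harmonic_Numbers"
begin

text \<open>
  Put L = ln (2 n |S| |A| / \<delta>) + |S| ln 2. With probability at least 1 - \<delta> the data are
  good: every pair with n \<rho>(s,a) > 10 L is visited at least n \<rho>(s,a) / 2 times (Chernoff),
  and at every visited pair, for every set A of next states, the empirical frequency of A
  exceeds P*(A|s,a) by at most sqrt (L / 2N), where N is the number of visits (Hoeffding, with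
  a union bound over the 2^|S| sets A and the possible values of N). Over all kernels the MLE
  is the empirical kernel (Gibbs' inequality), so on good data P* lies in the version space M_D.

  For every P in M_D, the simulation lemma followed by Cauchy-Schwarz against \<rho> gives
  V(\<pi>*, P*) - V(\<pi>*, P) \<le> H^2 \<Sum> d(s,a) |P*(s,a) - P(s,a)|_1 \<le> H^2 sqrt (C E_\<rho> |P* - P|_1^2).
  On well-visited pairs E_\<rho> is at most twice the empirical average, which is O(\<xi>) because
  P and P* both lie in M_D; the remaining pairs contribute O(|S| |A| L / n). Pessimism
  transfers the bound B to the output pihat of CPPO:
  V(\<pi>*, P*) - B \<le> min_M_D V(\<pi>*, -) \<le> min_M_D V(pihat, -) \<le> V(pihat, P*).
\<close>

section \<open>Distributions induced by a policy\<close>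

lemma sum_pmf_le_1: "finite A \<Longrightarrow> (\<Sum>x\<in>A. pmf p x) \<le> 1"
  by (metis measure_measure_pmf_finite measure_pmf.subprob_measure_le_1)

lemma set_state_dist:
  assumes d0: "set_pmf d0 \<subseteq> {..<nS}" and P: "is_kernel nS nA P" and pol: "is_policy nS nA pol"
  shows "set_pmf (state_dist d0 P pol t) \<subseteq> {..<nS}"
proof (induction t)
  case 0 then show ?case using d0 by simp
next
  case (Suc t)
  show ?case
  proof
    fix s' assume "s' \<in> set_pmf (state_dist d0 P pol (Suc t))"
    then obtain s a where s: "s \<in> set_pmf (state_dist d0 P pol t)" and a: "a \<in> set_pmf (pol t s)"
      and s': "s' \<in> set_pmf (P s a)" by auto
    have "s < nS" using s Suc by auto
    moreover have "a < nA" using a pol \<open>s < nS\<close> unfolding is_policy_def by auto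
    ultimately show "s' \<in> {..<nS}" using P s' unfolding is_kernel_def by auto
  qed
qed

lemma set_sa_dist:
  assumes "set_pmf d0 \<subseteq> {..<nS}" and "is_kernel nS nA P" and pol: "is_policy nS nA pol"
  shows "set_pmf (sa_dist d0 P pol t) \<subseteq> {..<nS} \<times> {..<nA}"
  using set_state_dist[OF assms, of t] pol unfolding sa_dist_def is_policy_def by auto

lemma pmf_sa_dist: "pmf (sa_dist d0 P pol t) (s, a) = pmf (state_dist d0 P pol t) s * pmf (pol t s) a"
proof -
  have "pmf (sa_dist d0 P pol t) (s, a) =
     (\<integral>x. pmf (map_pmf (\<lambda>a. (x, a)) (pol t x)) (s, a) \<partial>measure_pmf (state_dist d0 P pol t))"
    unfolding sa_dist_def by (simp add: pmf_bind)
  also have "\<dots> = (\<integral>x. indicator {s} x * pmf (pol t s) a \<partial>measure_pmf (state_dist d0 P pol t))"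
  proof (rule Bochner_Integration.integral_cong[OF refl])
    fix x
    show "pmf (map_pmf (\<lambda>a. (x, a)) (pol t x)) (s, a) = indicator {s} x * pmf (pol t s) a"
    proof (cases "x = s")
      case True
      then show ?thesis using pmf_map_inj'[of "\<lambda>a. (s, a)" "pol t s" a] by (simp add: inj_on_def)
    next
      case False
      then have "(s, a) \<notin> set_pmf (map_pmf (\<lambda>a. (x, a)) (pol t x))" by auto
      then show ?thesis using False by (metis indicator_simps(2) mult_eq_0_iff set_pmf_iff singletonD)
    qed
  qed
  also have "\<dots> = pmf (state_dist d0 P pol t) s * pmf (pol t s) a"
    by (simp add: measure_pmf_single)
  finally show ?thesis .
qed

lemma state_dist_Suc_eq_bind_sa_dist:
  "state_dist d0 P pol (Suc t) = bind_pmf (sa_dist d0 P pol t) (\<lambda>(s, a). P s a)"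
  unfolding sa_dist_def state_dist.simps by (simp add: bind_assoc_pmf bind_map_pmf case_prod_beta)

lemma pmf_state_dist_Suc:
  assumes "set_pmf d0 \<subseteq> {..<nS}" and "is_kernel nS nA P" and "is_policy nS nA pol"
  shows "pmf (state_dist d0 P pol (Suc t)) s' =
    (\<Sum>(s, a)\<in>{..<nS} \<times> {..<nA}. pmf (sa_dist d0 P pol t) (s, a) * pmf (P s a) s')"
proof -
  have "pmf (state_dist d0 P pol (Suc t)) s' =
     (\<integral>x. pmf (case x of (s, a) \<Rightarrow> P s a) s' \<partial>measure_pmf (sa_dist d0 P pol t))"
    unfolding state_dist_Suc_eq_bind_sa_dist pmf_bind ..
  also have "\<dots> = (\<Sum>x\<in>{..<nS} \<times> {..<nA}. pmf (case x of (s, a) \<Rightarrow> P s a) s' * pmf (sa_dist d0 P pol t) x)"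
    by (rule integral_measure_pmf_real) (use set_sa_dist[OF assms, of t] in auto)
  finally show ?thesis by (simp add: case_prod_beta mult.commute)
qed

lemma expectation_sa_dist:
  assumes "set_pmf d0 \<subseteq> {..<nS}" and "is_kernel nS nA P" and "is_policy nS nA pol"
  shows "measure_pmf.expectation (sa_dist d0 P pol t) (\<lambda>(s, a). f s a) =
    (\<Sum>(s, a)\<in>{..<nS} \<times> {..<nA}. pmf (sa_dist d0 P pol t) (s, a) * f s a)"
  by (subst integral_measure_pmf_real[where A = "{..<nS} \<times> {..<nA}"])
     (use set_sa_dist[OF assms, of t] in \<open>auto simp: case_prod_beta mult.commute\<close>)

lemma value_fn_nonneg:
  assumes "set_pmf d0 \<subseteq> {..<nS}" and "is_kernel nS nA P" and "is_policy nS nA pol"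
    and r: "\<forall>s a. s < nS \<longrightarrow> a < nA \<longrightarrow> 0 \<le> r s a \<and> r s a \<le> 1"
  shows "0 \<le> value_fn H r d0 P pol"
  unfolding value_fn_def expectation_sa_dist[OF assms(1-3)]
  using r by (intro sum_nonneg) auto

section \<open>Simulation lemma\<close>

lemma l1_mixture_le:
  fixes w v :: "'a \<Rightarrow> real" and K L :: "'a \<Rightarrow> 'b \<Rightarrow> real"
  assumes "finite X" and w: "\<And>x. x \<in> X \<Longrightarrow> 0 \<le> w x"
    and L: "\<And>x y. x \<in> X \<Longrightarrow> 0 \<le> L x y" "\<And>x. x \<in> X \<Longrightarrow> (\<Sum>y\<in>Y. L x y) \<le> 1"
  shows "(\<Sum>y\<in>Y. \<bar>\<Sum>x\<in>X. w x * K x y - v x * L x y\<bar>)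
    \<le> (\<Sum>x\<in>X. w x * (\<Sum>y\<in>Y. \<bar>K x y - L x y\<bar>)) + (\<Sum>x\<in>X. \<bar>w x - v x\<bar>)"
proof -
  have pointwise: "\<bar>w x * K x y - v x * L x y\<bar> \<le> w x * \<bar>K x y - L x y\<bar> + \<bar>w x - v x\<bar> * L x y"
    if "x \<in> X" for x y
  proof -
    have "w x * K x y - v x * L x y = w x * (K x y - L x y) + (w x - v x) * L x y"
      by (simp add: algebra_simps)
    then show ?thesis using w[OF that] L(1)[OF that] by (simp add: abs_mult abs_triangle_ineq[THEN order_trans])
  qed
  have "(\<Sum>y\<in>Y. \<bar>\<Sum>x\<in>X. w x * K x y - v x * L x y\<bar>)
      \<le> (\<Sum>y\<in>Y. \<Sum>x\<in>X. w x * \<bar>K x y - L x y\<bar> + \<bar>w x - v x\<bar> * L x y)"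
    by (intro sum_mono order.trans[OF sum_abs] pointwise)
  also have "\<dots> = (\<Sum>x\<in>X. w x * (\<Sum>y\<in>Y. \<bar>K x y - L x y\<bar>) + \<bar>w x - v x\<bar> * (\<Sum>y\<in>Y. L x y))"
    by (subst sum.swap) (simp add: sum.distrib sum_distrib_left)
  also have "\<dots> \<le> (\<Sum>x\<in>X. w x * (\<Sum>y\<in>Y. \<bar>K x y - L x y\<bar>) + \<bar>w x - v x\<bar>)"
    using L(2) by (intro sum_mono add_left_mono) (simp add: mult_left_le)
  finally show ?thesis by (simp add: sum.distrib)
qed

lemma sa_dist_l1_le_state_dist_l1:
  "(\<Sum>(s, a)\<in>{..<nS} \<times> {..<nA}. \<bar>pmf (sa_dist d0 Q pol t) (s, a) - pmf (sa_dist d0 P pol t) (s, a)\<bar>)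
    \<le> l1_dist nS (state_dist d0 Q pol t) (state_dist d0 P pol t)"
proof -
  let ?d = "\<lambda>s. \<bar>pmf (state_dist d0 Q pol t) s - pmf (state_dist d0 P pol t) s\<bar>"
  have "(\<Sum>(s, a)\<in>{..<nS} \<times> {..<nA}. \<bar>pmf (sa_dist d0 Q pol t) (s, a) - pmf (sa_dist d0 P pol t) (s, a)\<bar>)
      = (\<Sum>s<nS. ?d s * (\<Sum>a<nA. pmf (pol t s) a))"
    by (simp add: sum.cartesian_product[symmetric] pmf_sa_dist sum_distrib_left
        left_diff_distrib[symmetric] abs_mult)
  also have "\<dots> \<le> (\<Sum>s<nS. ?d s)"
    by (intro sum_mono mult_left_le sum_pmf_le_1) auto
  finally show ?thesis unfolding l1_dist_def .
qed

lemma l1_state_dist_Suc_le: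
  assumes "set_pmf d0 \<subseteq> {..<nS}" and Q: "is_kernel nS nA Q" and P: "is_kernel nS nA P"
    and "is_policy nS nA pol"
  shows "l1_dist nS (state_dist d0 Q pol (Suc t)) (state_dist d0 P pol (Suc t))
    \<le> (\<Sum>(s, a)\<in>{..<nS} \<times> {..<nA}. pmf (sa_dist d0 Q pol t) (s, a) * l1_dist nS (Q s a) (P s a))
      + l1_dist nS (state_dist d0 Q pol t) (state_dist d0 P pol t)"
proof -
  let ?X = "{..<nS} \<times> {..<nA}"
  let ?wQ = "pmf (sa_dist d0 Q pol t)" and ?wP = "pmf (sa_dist d0 P pol t)"
  have "l1_dist nS (state_dist d0 Q pol (Suc t)) (state_dist d0 P pol (Suc t))
      = (\<Sum>s'<nS. \<bar>\<Sum>x\<in>?X. ?wQ x * pmf (case_prod Q x) s' - ?wP x * pmf (case_prod P x) s'\<bar>)"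
    unfolding l1_dist_def pmf_state_dist_Suc[OF assms(1,2,4)] pmf_state_dist_Suc[OF assms(1,3,4)]
    by (simp add: sum_subtractf case_prod_beta)
  also have "\<dots> \<le> (\<Sum>x\<in>?X. ?wQ x * (\<Sum>s'<nS. \<bar>pmf (case_prod Q x) s' - pmf (case_prod P x) s'\<bar>))
      + (\<Sum>x\<in>?X. \<bar>?wQ x - ?wP x\<bar>)"
    by (rule l1_mixture_le) (auto intro: sum_pmf_le_1)
  also have "\<dots> \<le> (\<Sum>(s, a)\<in>?X. ?wQ (s, a) * l1_dist nS (Q s a) (P s a))
      + l1_dist nS (state_dist d0 Q pol t) (state_dist d0 P pol t)"
    using sa_dist_l1_le_state_dist_l1[where nS=nS and nA=nA and Q=Q and P=P and t=t]
    by (simp add: l1_dist_def case_prod_beta)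
  finally show ?thesis .
qed

lemma l1_state_dist_le:
  assumes "set_pmf d0 \<subseteq> {..<nS}" and "is_kernel nS nA Q" and "is_kernel nS nA P"
    and "is_policy nS nA pol"
  shows "l1_dist nS (state_dist d0 Q pol t) (state_dist d0 P pol t)
    \<le> (\<Sum>k<t. \<Sum>(s, a)\<in>{..<nS} \<times> {..<nA}. pmf (sa_dist d0 Q pol k) (s, a) * l1_dist nS (Q s a) (P s a))"
proof (induction t)
  case 0 then show ?case by (simp add: l1_dist_def)
next
  case (Suc t)
  then show ?case using l1_state_dist_Suc_le[OF assms, of t] by simp
qed

lemma expected_reward_diff_le_l1_state_dist:
  assumes "set_pmf d0 \<subseteq> {..<nS}" and "is_kernel nS nA Q" and "is_kernel nS nA P"
    and "is_policy nS nA pol" and r: "\<forall>s a. s < nS \<longrightarrow> a < nA \<longrightarrow> 0 \<le> r s a \<and> r s a \<le> 1"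
  shows "measure_pmf.expectation (sa_dist d0 Q pol t) (\<lambda>(s, a). r s a)
       - measure_pmf.expectation (sa_dist d0 P pol t) (\<lambda>(s, a). r s a)
     \<le> l1_dist nS (state_dist d0 Q pol t) (state_dist d0 P pol t)"
proof -
  let ?X = "{..<nS} \<times> {..<nA}"
  have "measure_pmf.expectation (sa_dist d0 Q pol t) (\<lambda>(s, a). r s a)
       - measure_pmf.expectation (sa_dist d0 P pol t) (\<lambda>(s, a). r s a)
     = (\<Sum>(s, a)\<in>?X. (pmf (sa_dist d0 Q pol t) (s, a) - pmf (sa_dist d0 P pol t) (s, a)) * r s a)"
    unfolding expectation_sa_dist[OF assms(1,2,4)] expectation_sa_dist[OF assms(1,3,4)]
    by (simp add: sum_subtractf left_diff_distrib case_prod_beta)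
  also have "\<dots> \<le> (\<Sum>(s, a)\<in>?X. \<bar>pmf (sa_dist d0 Q pol t) (s, a) - pmf (sa_dist d0 P pol t) (s, a)\<bar>)"
  proof (intro sum_mono, clarify)
    fix s a assume "s < nS" "a < nA"
    then have "0 \<le> r s a" "r s a \<le> 1" using r by auto
    then show "(pmf (sa_dist d0 Q pol t) (s, a) - pmf (sa_dist d0 P pol t) (s, a)) * r s a
        \<le> \<bar>pmf (sa_dist d0 Q pol t) (s, a) - pmf (sa_dist d0 P pol t) (s, a)\<bar>"
      by (metis abs_ge_self abs_mult abs_of_nonneg mult_left_le abs_ge_zero order_trans)
  qed
  also have "\<dots> \<le> l1_dist nS (state_dist d0 Q pol t) (state_dist d0 P pol t)"
    by (rule sa_dist_l1_le_state_dist_l1)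
  finally show ?thesis .
qed

lemma value_diff_le_occupancy_l1:
  assumes "set_pmf d0 \<subseteq> {..<nS}" and "is_kernel nS nA Q" and "is_kernel nS nA P"
    and "is_policy nS nA pol" and "\<forall>s a. s < nS \<longrightarrow> a < nA \<longrightarrow> 0 \<le> r s a \<and> r s a \<le> 1"
    and H: "H \<ge> 1"
  shows "value_fn H r d0 Q pol - value_fn H r d0 P pol
     \<le> real H ^ 2 * (\<Sum>(s, a)\<in>{..<nS} \<times> {..<nA}. occupancy H d0 Q pol (s, a) * l1_dist nS (Q s a) (P s a))"
proof -
  let ?X = "{..<nS} \<times> {..<nA}"
  define g where "g k = (\<Sum>(s, a)\<in>?X. pmf (sa_dist d0 Q pol k) (s, a) * l1_dist nS (Q s a) (P s a))" for k
  have g0: "0 \<le> g k" for k unfolding g_def l1_dist_def by (intro sum_nonneg) auto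
  have "value_fn H r d0 Q pol - value_fn H r d0 P pol \<le> (\<Sum>t<H. \<Sum>k<t. g k)"
    unfolding value_fn_def sum_subtractf[symmetric] g_def
    by (intro sum_mono order.trans[OF expected_reward_diff_le_l1_state_dist[OF assms(1-5)]]
        l1_state_dist_le[OF assms(1-4)])
  also have "\<dots> \<le> (\<Sum>t<H. \<Sum>k<H. g k)"
    by (intro sum_mono sum_mono2) (auto simp: g0)
  also have "\<dots> = real H * (\<Sum>k<H. g k)" by simp
  also have "(\<Sum>k<H. g k) = real H * (\<Sum>(s, a)\<in>?X. occupancy H d0 Q pol (s, a) * l1_dist nS (Q s a) (P s a))"
    using H unfolding g_def occupancy_def
    by (subst sum.swap) (simp add: sum_distrib_left sum_distrib_right case_prod_beta)
  finally show ?thesis by (simp add: power2_eq_square mult_ac)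
qed

section \<open>Concentration of the data\<close>

lemma nn_integral_prod_Pi_pmf:
  fixes g :: "'a \<Rightarrow> ennreal"
  shows "(\<integral>\<^sup>+D. (\<Prod>i<n. g (D i)) \<partial>Pi_pmf {..<n} dflt (\<lambda>_. q)) = (\<integral>\<^sup>+x. g x \<partial>q) ^ n"
proof (induction n)
  case 0 then show ?case by simp
next
  case (Suc n)
  have "Pi_pmf {..<Suc n} dflt (\<lambda>_. q) = Pi_pmf (insert n {..<n}) dflt (\<lambda>_. q)"
    by (simp add: lessThan_Suc)
  also have "\<dots> = map_pmf (\<lambda>(y, f). f(n := y)) (pair_pmf q (Pi_pmf {..<n} dflt (\<lambda>_. q)))"
    by (rule Pi_pmf_insert) auto
  finally have Pi_Suc: "Pi_pmf {..<Suc n} dflt (\<lambda>_. q) = \<dots>" .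
  have "(\<integral>\<^sup>+D. (\<Prod>i<Suc n. g (D i)) \<partial>Pi_pmf {..<Suc n} dflt (\<lambda>_. q))
     = (\<integral>\<^sup>+y. \<integral>\<^sup>+f. g y * (\<Prod>i<n. g (f i)) \<partial>Pi_pmf {..<n} dflt (\<lambda>_. q) \<partial>q)"
    unfolding Pi_Suc nn_integral_map_pmf nn_integral_pair_pmf'
    by (simp add: prod.lessThan_Suc mult.commute)
  also have "\<dots> = (\<integral>\<^sup>+y. g y * (\<integral>\<^sup>+x. g x \<partial>q) ^ n \<partial>q)"
    by (subst nn_integral_cmult) (simp_all add: Suc.IH)
  also have "\<dots> = (\<integral>\<^sup>+x. g x \<partial>q) ^ Suc n"
    by (subst nn_integral_multc) (simp_all add: mult.commute)
  finally show ?case .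
qed

lemma prob_pmf_Markov_inequality:
  fixes h :: "'a \<Rightarrow> real" and M :: "'a pmf"
  assumes "\<And>x. 0 \<le> h x" and "(\<integral>\<^sup>+x. ennreal (h x) \<partial>M) \<le> ennreal B" and "0 \<le> B" and "c > 0"
  shows "measure_pmf.prob M {x. c \<le> h x} \<le> B / c"
proof -
  let ?S = "{x. c \<le> h x}"
  have "ennreal c * emeasure M ?S = (\<integral>\<^sup>+x. ennreal c * indicator ?S x \<partial>M)"
    by (simp add: nn_integral_cmult_indicator)
  also have "\<dots> \<le> (\<integral>\<^sup>+x. ennreal (h x) \<partial>M)"
    by (intro nn_integral_mono) (auto simp: indicator_def ennreal_leI)
  also have "\<dots> \<le> ennreal B" by fact
  finally have "ennreal (c * measure_pmf.prob M ?S) \<le> ennreal B"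
    using \<open>c > 0\<close> by (simp add: measure_pmf.emeasure_eq_measure ennreal_mult)
  then have "c * measure_pmf.prob M ?S \<le> B" using \<open>0 \<le> B\<close> by (simp add: ennreal_le_iff)
  then show ?thesis using \<open>c > 0\<close> by (simp add: field_simps)
qed

lemma prob_Pi_pmf_prod_ge_le:
  fixes f :: "'a \<Rightarrow> real" and q :: "'a pmf"
  assumes f: "\<And>x. 0 \<le> f x" and fM: "(\<integral>\<^sup>+x. ennreal (f x) \<partial>q) \<le> ennreal M" and "0 \<le> M" and "c > 0"
  shows "measure_pmf.prob (Pi_pmf {..<n} dflt (\<lambda>_. q)) {D. c \<le> (\<Prod>i<n. f (D i))} \<le> M ^ n / c"
proof (rule prob_pmf_Markov_inequality)
  have "(\<integral>\<^sup>+D. ennreal (\<Prod>i<n. f (D i)) \<partial>Pi_pmf {..<n} dflt (\<lambda>_. q))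
      = (\<integral>\<^sup>+D. (\<Prod>i<n. ennreal (f (D i))) \<partial>Pi_pmf {..<n} dflt (\<lambda>_. q))"
    using f by (simp add: prod_ennreal)
  also have "\<dots> = (\<integral>\<^sup>+x. ennreal (f x) \<partial>q) ^ n"
    by (rule nn_integral_prod_Pi_pmf)
  also have "\<dots> \<le> ennreal (M ^ n)"
    using fM \<open>0 \<le> M\<close> by (simp add: power_mono ennreal_power[symmetric])
  finally show "(\<integral>\<^sup>+D. ennreal (\<Prod>i<n. f (D i)) \<partial>Pi_pmf {..<n} dflt (\<lambda>_. q)) \<le> ennreal (M ^ n)" .
qed (use assms in \<open>auto intro: prod_nonneg\<close>)

lemma nn_integral_sample_pmf:
  "(\<integral>\<^sup>+x. g x \<partial>sample_pmf rho Pstar) =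
   (\<integral>\<^sup>+sa. (\<integral>\<^sup>+s'. g (fst sa, snd sa, s') \<partial>Pstar (fst sa) (snd sa)) \<partial>rho)"
  unfolding sample_pmf_def by (simp add: case_prod_beta)

definition sample_at :: "nat \<Rightarrow> nat \<Rightarrow> nat \<times> nat \<times> nat \<Rightarrow> bool" where
  "sample_at s a x \<longleftrightarrow> fst x = s \<and> fst (snd x) = a"

definition visits :: "nat \<Rightarrow> (nat \<Rightarrow> nat \<times> nat \<times> nat) \<Rightarrow> nat \<Rightarrow> nat \<Rightarrow> nat set" where
  "visits n D s a = {i\<in>{..<n}. sample_at s a (D i)}"

definition deviation ::
  "nat \<Rightarrow> (nat \<Rightarrow> nat \<Rightarrow> nat pmf) \<Rightarrow> (nat \<Rightarrow> nat \<times> nat \<times> nat) \<Rightarrow> nat \<Rightarrow> nat \<Rightarrow> nat set \<Rightarrow> real" where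
  "deviation n Pstar D s a A =
     (\<Sum>i\<in>visits n D s a. indicator A (snd (snd (D i))) - measure_pmf.prob (Pstar s a) A)"

lemma finite_visits [simp]: "finite (visits n D s a)"
  by (simp add: visits_def)

lemma card_visits_le: "card (visits n D s a) \<le> n"
  using card_mono[of "{..<n}" "visits n D s a"] by (auto simp: visits_def)

lemma sum_visits:
  "(\<Sum>i\<in>visits n D s a. f i) = (\<Sum>i<n. if sample_at s a (D i) then f i else 0)"
  unfolding visits_def by (rule sum.inter_filter) simp

text \<open>Chernoff: the weight \<open>2\<^sup>-\<^sup>N\<close>, with \<open>N\<close> the number of visits, has mean at most
  \<open>exp (- n rho(s,a) / 2)\<close>, and \<open>ln 2 \<le> 4/5\<close> leaves the exponent \<open>1/10\<close>.\<close>
lemma prob_few_visits: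
  "measure_pmf.prob (data_pmf n rho Pstar)
     {D. real (card (visits n D s a)) < real n * pmf rho (s, a) / 2}
   \<le> exp (- (real n * pmf rho (s, a)) / 10)"
proof -
  define \<rho> where "\<rho> = pmf rho (s, a)"
  define f where "f x = exp (- ln (2::real) * (if sample_at s a x then 1 else 0))" for x :: "nat \<times> nat \<times> nat"
  have prod_f: "(\<Prod>i<n. f (D i)) = exp (- ln 2 * real (card (visits n D s a)))" for D
    using sum_visits[where f="\<lambda>_. 1::real" and n=n and D=D]
    by (simp add: f_def exp_sum[symmetric] sum_distrib_left)
  have "(\<integral>\<^sup>+x. ennreal (f x) \<partial>sample_pmf rho Pstar)
      = (\<integral>\<^sup>+sa. ennreal (1 - 1/2 * indicator {(s, a)} sa) \<partial>rho)"
    unfolding nn_integral_sample_pmf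
    by (intro nn_integral_cong) (auto simp: f_def sample_at_def indicator_def exp_minus)
  also have "\<dots> = ennreal (\<integral>sa. 1 - 1/2 * indicator {(s, a)} sa \<partial>rho)"
    by (intro nn_integral_eq_integral measure_pmf.integrable_const_bound[where B=1])
       (auto simp: indicator_def)
  also have "(\<integral>sa. 1 - 1/2 * indicator {(s, a)} sa \<partial>rho) = 1 - \<rho> / 2"
  proof -
    have "integrable rho (\<lambda>sa. 1/2 * indicator {(s, a)} sa :: real)"
      by (intro measure_pmf.integrable_const_bound[where B=1]) (auto simp: indicator_def)
    then show ?thesis
      by (subst Bochner_Integration.integral_diff) (auto simp: \<rho>_def measure_pmf_single)
  qed
  also have "\<dots> \<le> ennreal (exp (- \<rho> / 2))"
    using exp_ge_add_one_self[of "- \<rho> / 2"] by (intro ennreal_leI) simp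
  finally have int_f: "(\<integral>\<^sup>+x. ennreal (f x) \<partial>sample_pmf rho Pstar) \<le> ennreal (exp (- \<rho> / 2))" .
  define c where "c = exp (- ln 2 * (real n * \<rho> / 2))"
  have "measure_pmf.prob (data_pmf n rho Pstar) {D. real (card (visits n D s a)) < real n * \<rho> / 2}
      \<le> measure_pmf.prob (data_pmf n rho Pstar) {D. c \<le> (\<Prod>i<n. f (D i))}"
    by (rule measure_pmf.finite_measure_mono) (auto simp: prod_f c_def)
  also have "\<dots> \<le> exp (- \<rho> / 2) ^ n / c"
    unfolding data_pmf_def by (rule prob_Pi_pmf_prod_ge_le[OF _ int_f]) (auto simp: f_def c_def)
  also have "\<dots> = exp (- (real n * \<rho>) * ((1 - ln 2) / 2))"
    unfolding c_def by (simp add: exp_diff[symmetric] exp_of_nat_mult[symmetric] algebra_simps)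
  also have "\<dots> \<le> exp (- (real n * \<rho>) / 10)"
  proof -
    have "1/10 \<le> (1 - ln (2::real)) / 2" using ln2_le_25_over_36 by simp
    then have "real n * \<rho> * (1/10) \<le> real n * \<rho> * ((1 - ln 2) / 2)"
      by (intro mult_left_mono) (auto simp: \<rho>_def)
    then show ?thesis by simp
  qed
  finally show ?thesis by (simp add: \<rho>_def)
qed

lemma nn_integral_exp_visit_deviation_le_1:
  assumes "lam > 0"
  shows "(\<integral>\<^sup>+x. ennreal (exp (if sample_at s a x
            then lam * (indicator A (snd (snd x)) - measure_pmf.prob (Pstar s a) A) - lam\<^sup>2 / 8
            else 0)) \<partial>sample_pmf rho Pstar) \<le> 1"
proof -
  define p where "p = measure_pmf.prob (Pstar s a) A"
  have inner: "(\<integral>\<^sup>+s'. ennreal (exp (if sample_at s a (s0, a0, s')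
      then lam * (indicator A s' - p) - lam\<^sup>2 / 8 else 0)) \<partial>Pstar s0 a0) \<le> 1" for s0 a0
  proof (cases "s0 = s \<and> a0 = a")
    case True
    interpret I: interval_bounded_random_variable "measure_pmf (Pstar s a)" "\<lambda>s'. indicator A s'" 0 1
      by unfold_locales (auto simp: indicator_def)
    have "(\<integral>\<^sup>+s'. ennreal (exp (if sample_at s a (s0, a0, s')
        then lam * (indicator A s' - p) - lam\<^sup>2 / 8 else 0)) \<partial>Pstar s0 a0)
      = (\<integral>\<^sup>+s'. ennreal (exp (- lam\<^sup>2 / 8)) * ennreal (exp (lam * (indicator A s' - p))) \<partial>Pstar s a)"
      using True by (simp add: sample_at_def exp_add[symmetric] ennreal_mult[symmetric])
    also have "\<dots> = ennreal (exp (- lam\<^sup>2 / 8)) * (\<integral>\<^sup>+s'. ennreal (exp (lam * (indicator A s' - p))) \<partial>Pstar s a)"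
      by (rule nn_integral_cmult) simp
    also have "\<dots> \<le> ennreal (exp (- lam\<^sup>2 / 8)) * ennreal (exp (lam\<^sup>2 * (1 - 0)\<^sup>2 / 8))"
      using I.Hoeffdings_lemma_nn_integral[OF assms] by (intro mult_left_mono) (auto simp: p_def)
    also have "\<dots> = 1" by (simp flip: ennreal_mult exp_add)
    finally show ?thesis .
  next
    case False
    then have "\<not> sample_at s a (s0, a0, s')" for s' by (auto simp: sample_at_def)
    then show ?thesis by simp
  qed
  have "(\<integral>\<^sup>+x. ennreal (exp (if sample_at s a x
            then lam * (indicator A (snd (snd x)) - p) - lam\<^sup>2 / 8 else 0)) \<partial>sample_pmf rho Pstar)
      \<le> (\<integral>\<^sup>+sa. 1 \<partial>rho)"
    unfolding nn_integral_sample_pmf by (intro nn_integral_mono) (simp add: inner cong: if_cong)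
  then show ?thesis by (simp add: p_def cong: if_cong)
qed

text \<open>Every sample contributes the factor \<open>exp (lam (1\<^sub>A s' - P\<^sup>\<star>(A|s,a)) - lam\<^sup>2/8)\<close> if it
  visits \<open>(s,a)\<close> and \<open>1\<close> otherwise; by Hoeffding's lemma each factor has mean at most one,
  so the random number of visits does no harm. The choice \<open>lam = sqrt (8 L / m)\<close> then gives
  Markov's inequality for the product.\<close>
lemma prob_deviation_high:
  assumes L: "L > 0" and m: "m \<ge> 1"
  shows "measure_pmf.prob (data_pmf n rho Pstar)
     {D. card (visits n D s a) = m \<and> sqrt (real m * L / 2) < deviation n Pstar D s a A} \<le> exp (- L)"
proof -
  define lam where "lam = sqrt (8 * L / real m)"
  define f where "f x = exp (if sample_at s a x
      then lam * (indicator A (snd (snd x)) - measure_pmf.prob (Pstar s a) A) - lam\<^sup>2 / 8 else 0)"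
    for x :: "nat \<times> nat \<times> nat"
  have m0: "real m > 0" using m by simp
  have lam0: "lam > 0" using L m0 by (simp add: lam_def)
  have lam2: "lam\<^sup>2 / 8 * real m = L" using L m0 by (simp add: lam_def)
  have lam_sqrt: "lam * sqrt (real m * L / 2) = 2 * L"
  proof -
    have "lam * sqrt (real m * L / 2) = sqrt (8 * L / real m * (real m * L / 2))"
      unfolding lam_def by (rule real_sqrt_mult[symmetric])
    also have "8 * L / real m * (real m * L / 2) = (2 * L)\<^sup>2"
      using m0 by (simp add: power2_eq_square)
    finally show ?thesis using L by (simp add: real_sqrt_unique)
  qed
  have prod_f: "(\<Prod>i<n. f (D i)) = exp (lam * deviation n Pstar D s a A - lam\<^sup>2 / 8 * real (card (visits n D s a)))"
    for D
  proof -
    have "(\<Prod>i<n. f (D i)) = exp (\<Sum>i\<in>visits n D s a.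
        lam * (indicator A (snd (snd (D i))) - measure_pmf.prob (Pstar s a) A) - lam\<^sup>2 / 8)"
      unfolding f_def sum_visits by (simp add: exp_sum)
    also have "\<dots> = exp (lam * (\<Sum>i\<in>visits n D s a.
        indicator A (snd (snd (D i))) - measure_pmf.prob (Pstar s a) A)
        - lam\<^sup>2 / 8 * real (card (visits n D s a)))"
      by (simp add: sum_subtractf sum_distrib_left[symmetric] right_diff_distrib mult_ac)
    finally show ?thesis unfolding deviation_def .
  qed
  have "{D. card (visits n D s a) = m \<and> sqrt (real m * L / 2) < deviation n Pstar D s a A}
      \<subseteq> {D. exp L \<le> (\<Prod>i<n. f (D i))}"
  proof
    fix D assume "D \<in> {D. card (visits n D s a) = m \<and> sqrt (real m * L / 2) < deviation n Pstar D s a A}"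
    then have card: "card (visits n D s a) = m" and dev: "sqrt (real m * L / 2) < deviation n Pstar D s a A"
      by auto
    have "L \<le> lam * deviation n Pstar D s a A - lam\<^sup>2 / 8 * real (card (visits n D s a))"
      using mult_strict_left_mono[OF dev lam0] lam_sqrt lam2 card by simp
    then show "D \<in> {D. exp L \<le> (\<Prod>i<n. f (D i))}" by (simp add: prod_f)
  qed
  then have "measure_pmf.prob (data_pmf n rho Pstar)
      {D. card (visits n D s a) = m \<and> sqrt (real m * L / 2) < deviation n Pstar D s a A}
    \<le> measure_pmf.prob (data_pmf n rho Pstar) {D. exp L \<le> (\<Prod>i<n. f (D i))}"
    by (rule measure_pmf.finite_measure_mono) simp
  also have "\<dots> \<le> 1 ^ n / exp L"
    unfolding data_pmf_def f_def
    by (rule prob_Pi_pmf_prod_ge_le) (use nn_integral_exp_visit_deviation_le_1[OF lam0] in auto)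
  finally show ?thesis by (simp add: exp_minus field_simps)
qed

lemma prob_few_visits_of_charged_pair:
  "measure_pmf.prob (data_pmf n rho Pstar)
     {D. 10 * L < real n * pmf rho (s, a) \<and> real (card (visits n D s a)) < real n * pmf rho (s, a) / 2}
   \<le> exp (- L)"
proof (cases "10 * L < real n * pmf rho (s, a)")
  case True
  have "measure_pmf.prob (data_pmf n rho Pstar)
     {D. 10 * L < real n * pmf rho (s, a) \<and> real (card (visits n D s a)) < real n * pmf rho (s, a) / 2}
    \<le> measure_pmf.prob (data_pmf n rho Pstar) {D. real (card (visits n D s a)) < real n * pmf rho (s, a) / 2}"
    by (rule measure_pmf.finite_measure_mono) auto
  also have "\<dots> \<le> exp (- (real n * pmf rho (s, a)) / 10)" by (rule prob_few_visits)
  also have "\<dots> \<le> exp (- L)" using True by simp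
  finally show ?thesis .
qed simp

definition good_data ::
  "nat \<Rightarrow> nat \<Rightarrow> nat \<Rightarrow> (nat \<times> nat) pmf \<Rightarrow> (nat \<Rightarrow> nat \<Rightarrow> nat pmf) \<Rightarrow> real \<Rightarrow> (nat \<Rightarrow> nat \<times> nat \<times> nat) \<Rightarrow> bool"
where
  "good_data nS nA n rho Pstar L D \<longleftrightarrow>
     (\<forall>s<nS. \<forall>a<nA. 10 * L < real n * pmf rho (s, a) \<longrightarrow>
        real n * pmf rho (s, a) / 2 \<le> real (card (visits n D s a))) \<and>
     (\<forall>s<nS. \<forall>a<nA. \<forall>A. A \<subseteq> {..<nS} \<longrightarrow> visits n D s a \<noteq> {} \<longrightarrow>
        deviation n Pstar D s a A \<le> sqrt (real (card (visits n D s a)) * L / 2))"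

lemma prob_not_good_data_le:
  assumes L: "L > 0"
  shows "measure_pmf.prob (data_pmf n rho Pstar) {D. \<not> good_data nS nA n rho Pstar L D}
    \<le> real nS * real nA * (1 + 2 ^ nS * real n) * exp (- L)"
proof -
  let ?M = "data_pmf n rho Pstar"
  define F1 where "F1 x = {D. 10 * L < real n * pmf rho x \<and>
      real (card (visits n D (fst x) (snd x))) < real n * pmf rho x / 2}" for x
  define F2 where "F2 y = {D. card (visits n D (fst (fst y)) (snd (fst y))) = snd (snd y) \<and>
      sqrt (real (snd (snd y)) * L / 2) < deviation n Pstar D (fst (fst y)) (snd (fst y)) (fst (snd y))}"
    for y :: "(nat \<times> nat) \<times> nat set \<times> nat"
  define I1 where "I1 = {..<nS} \<times> {..<nA}"
  define I2 where "I2 = I1 \<times> (Pow {..<nS} \<times> {1..n})"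
  have "{D. \<not> good_data nS nA n rho Pstar L D} \<subseteq> (\<Union>x\<in>I1. F1 x) \<union> (\<Union>y\<in>I2. F2 y)"
  proof
    fix D assume "D \<in> {D. \<not> good_data nS nA n rho Pstar L D}"
    then consider s a where "(s, a) \<in> I1" "D \<in> F1 (s, a)"
      | s a A where "(s, a) \<in> I1" "A \<subseteq> {..<nS}" "visits n D s a \<noteq> {}"
          "sqrt (real (card (visits n D s a)) * L / 2) < deviation n Pstar D s a A"
      unfolding good_data_def F1_def I1_def by (simp add: not_le) blast
    then show "D \<in> (\<Union>x\<in>I1. F1 x) \<union> (\<Union>y\<in>I2. F2 y)"
    proof cases
      case (2 s a A)
      then have "card (visits n D s a) \<in> {1..n}"
        using card_visits_le[of n D s a] by (auto simp: Suc_le_eq card_gt_0_iff)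
      then have "((s, a), A, card (visits n D s a)) \<in> I2" using 2 by (simp add: I2_def)
      moreover have "D \<in> F2 ((s, a), A, card (visits n D s a))" using 2 by (simp add: F2_def)
      ultimately show ?thesis by blast
    qed (auto simp: I1_def)
  qed
  then have "measure_pmf.prob ?M {D. \<not> good_data nS nA n rho Pstar L D}
      \<le> measure_pmf.prob ?M (\<Union>x\<in>I1. F1 x) + measure_pmf.prob ?M (\<Union>y\<in>I2. F2 y)"
    by (intro order.trans[OF measure_pmf.finite_measure_mono measure_subadditive])
       (auto simp: measure_pmf.emeasure_eq_measure)
  also have "\<dots> \<le> (\<Sum>x\<in>I1. measure_pmf.prob ?M (F1 x)) + (\<Sum>y\<in>I2. measure_pmf.prob ?M (F2 y))"
    by (intro add_mono measure_pmf.finite_measure_subadditive_finite) (auto simp: I1_def I2_def)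
  also have "\<dots> \<le> (\<Sum>x\<in>I1. exp (- L)) + (\<Sum>y\<in>I2. exp (- L))"
  proof (intro add_mono sum_mono)
    fix x :: "nat \<times> nat"
    show "measure_pmf.prob ?M (F1 x) \<le> exp (- L)"
      using prob_few_visits_of_charged_pair[where s="fst x" and a="snd x"] by (simp add: F1_def)
  next
    fix y assume "y \<in> I2"
    then show "measure_pmf.prob ?M (F2 y) \<le> exp (- L)"
      unfolding F2_def by (intro prob_deviation_high L) (auto simp: I2_def)
  qed
  also have "\<dots> = real nS * real nA * (1 + 2 ^ nS * real n) * exp (- L)"
    by (simp add: I1_def I2_def card_cartesian_product card_Pow algebra_simps)
  finally show ?thesis .
qed

section \<open>The maximum likelihood kernel is the empirical kernel\<close>

definition data_in_range :: "nat \<Rightarrow> nat \<Rightarrow> nat \<Rightarrow> (nat \<Rightarrow> nat \<times> nat \<times> nat) \<Rightarrow> bool" where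
  "data_in_range nS nA n D \<longleftrightarrow> (\<forall>i<n. fst (D i) < nS \<and> fst (snd (D i)) < nA \<and> snd (snd (D i)) < nS)"

lemma data_in_range_if_in_support:
  assumes D: "D \<in> set_pmf (data_pmf n rho Pstar)"
    and rho: "set_pmf rho \<subseteq> {..<nS} \<times> {..<nA}" and Pstar: "is_kernel nS nA Pstar"
  shows "data_in_range nS nA n D"
  unfolding data_in_range_def
proof (intro allI impI)
  fix i assume "i < n"
  then have "D i \<in> set_pmf (sample_pmf rho Pstar)"
    using D unfolding data_pmf_def by (auto simp: set_Pi_pmf PiE_dflt_def)
  then obtain s a s' where "(s, a) \<in> set_pmf rho" "s' \<in> set_pmf (Pstar s a)" "D i = (s, a, s')"
    unfolding sample_pmf_def by auto
  then show "fst (D i) < nS \<and> fst (snd (D i)) < nA \<and> snd (snd (D i)) < nS"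
    using rho Pstar unfolding is_kernel_def by auto
qed

definition likelihood :: "nat \<Rightarrow> (nat \<Rightarrow> nat \<times> nat \<times> nat) \<Rightarrow> (nat \<Rightarrow> nat \<Rightarrow> nat pmf) \<Rightarrow> real" where
  "likelihood n D P = (\<Prod>i<n. pmf (P (fst (D i)) (fst (snd (D i)))) (snd (snd (D i))))"

text \<open>The value at unvisited pairs is arbitrary: the likelihood does not depend on it.\<close>
definition empirical_kernel :: "nat \<Rightarrow> (nat \<Rightarrow> nat \<times> nat \<times> nat) \<Rightarrow> nat \<Rightarrow> nat \<Rightarrow> nat pmf" where
  "empirical_kernel n D s a =
     (if visits n D s a = {} then return_pmf 0
      else map_pmf (\<lambda>i. snd (snd (D i))) (pmf_of_set (visits n D s a)))"

lemma measure_empirical_kernel: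
  assumes "visits n D s a \<noteq> {}"
  shows "measure_pmf.prob (empirical_kernel n D s a) B =
    real (card {i\<in>visits n D s a. snd (snd (D i)) \<in> B}) / real (card (visits n D s a))"
proof -
  have "{i\<in>visits n D s a. snd (snd (D i)) \<in> B} = visits n D s a \<inter> (\<lambda>i. snd (snd (D i))) -` B"
    by auto
  then show ?thesis using assms by (simp add: empirical_kernel_def measure_pmf_of_set)
qed

lemma pmf_empirical_kernel:
  assumes "visits n D s a \<noteq> {}"
  shows "pmf (empirical_kernel n D s a) s' =
    real (card {i\<in>visits n D s a. snd (snd (D i)) = s'}) / real (card (visits n D s a))"
  using measure_empirical_kernel[OF assms, of "{s'}"] by (simp add: measure_pmf_single)

lemma empirical_kernel_is_kernel:
  assumes "data_in_range nS nA n D" and "nS \<ge> 1"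
  shows "is_kernel nS nA (empirical_kernel n D)"
  using assms by (auto simp: is_kernel_def empirical_kernel_def data_in_range_def visits_def)

lemma likelihood_empirical_kernel_pos: "likelihood n D (empirical_kernel n D) > 0"
  unfolding likelihood_def
proof (rule prod_pos)
  fix i assume "i \<in> {..<n}"
  then have i: "i \<in> {j\<in>visits n D (fst (D i)) (fst (snd (D i))). snd (snd (D j)) = snd (snd (D i))}"
    by (simp add: visits_def sample_at_def)
  then have "visits n D (fst (D i)) (fst (snd (D i))) \<noteq> {}" by auto
  with i show "0 < pmf (empirical_kernel n D (fst (D i)) (fst (snd (D i)))) (snd (snd (D i)))"
    by (auto simp: pmf_empirical_kernel card_gt_0_iff intro!: divide_pos_pos)
qed

lemma factor_pos_if_prod_pos:
  fixes f :: "'a \<Rightarrow> real"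
  assumes "finite I" and "\<And>i. i \<in> I \<Longrightarrow> 0 \<le> f i" and "0 < (\<Prod>i\<in>I. f i)" and "i \<in> I"
  shows "0 < f i"
  using assms by (metis order_less_le prod_zero_iff)

lemma sum_by_fibres:
  fixes h :: "'b \<Rightarrow> real"
  assumes "finite I" "finite B" "g ` I \<subseteq> B"
  shows "(\<Sum>i\<in>I. h (g i)) = (\<Sum>b\<in>B. real (card {i\<in>I. g i = b}) * h b)"
proof -
  have "(\<Sum>i\<in>I. h (g i)) = (\<Sum>i\<in>I. \<Sum>b\<in>B. if g i = b then h b else 0)"
    using assms by (intro sum.cong refl) (auto simp: sum.delta)
  also have "\<dots> = (\<Sum>b\<in>B. \<Sum>i\<in>I. if g i = b then h b else 0)" by (rule sum.swap)
  also have "\<dots> = (\<Sum>b\<in>B. real (card {i\<in>I. g i = b}) * h b)"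
    using assms by (intro sum.cong refl) (simp add: sum.If_cases Int_def conj_commute)
  finally show ?thesis .
qed

text \<open>Equality case of \<open>ln x \<le> x - 1\<close>.\<close>
lemma eq_1_if_sum_ln_nonneg:
  fixes x :: "'a \<Rightarrow> real"
  assumes I: "finite I" and pos: "\<And>i. i \<in> I \<Longrightarrow> x i > 0"
    and ln: "0 \<le> (\<Sum>i\<in>I. ln (x i))" and sum: "(\<Sum>i\<in>I. x i) \<le> real (card I)"
    and i: "i \<in> I"
  shows "x i = 1"
proof -
  have gap: "0 \<le> x j - 1 - ln (x j)" if "j \<in> I" for j using ln_le_minus_one[OF pos[OF that]] by simp
  have "(\<Sum>j\<in>I. x j - 1 - ln (x j)) \<le> 0" using ln sum by (simp add: sum_subtractf)
  moreover have "0 \<le> (\<Sum>j\<in>I. x j - 1 - ln (x j))" using gap by (intro sum_nonneg)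
  ultimately have "(\<Sum>j\<in>I. x j - 1 - ln (x j)) = 0" by linarith
  then have "ln (x i) = x i - 1" using sum_nonneg_eq_0_iff[OF I gap] i by simp
  then show ?thesis using ln_eq_minus_one[OF pos[OF i]] by simp
qed

lemma pmf_eq_0_if_sum_pmf_eq_1:
  assumes "finite B" and "(\<Sum>b\<in>B. pmf p b) = 1" and "b \<notin> B"
  shows "pmf p b = 0"
proof -
  have "(\<Sum>b\<in>insert b B. pmf p b) \<le> 1" by (rule sum_pmf_le_1) (use assms in simp)
  then have "pmf p b \<le> 0" using assms by simp
  with pmf_nonneg[of p b] show ?thesis by linarith
qed

text \<open>Gibbs' inequality in likelihood form.\<close>
lemma pmf_eq_empirical_on_sample_if_likelihood_ge:
  fixes y :: "'i \<Rightarrow> 'b" and p :: "'b pmf"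
  assumes I: "finite I" "I \<noteq> {}"
  defines "q \<equiv> \<lambda>b. real (card {i\<in>I. y i = b}) / real (card I)"
  assumes le: "(\<Prod>i\<in>I. q (y i)) \<le> (\<Prod>i\<in>I. pmf p (y i))" and i: "i \<in> I"
  shows "pmf p (y i) = q (y i)"
proof -
  have qpos: "q (y i) > 0" if "i \<in> I" for i
  proof -
    have "i \<in> {j\<in>I. y j = y i}" using that by simp
    then show ?thesis using I by (auto simp: q_def card_gt_0_iff intro!: divide_pos_pos)
  qed
  have "(\<Prod>i\<in>I. pmf p (y i)) > 0" using le prod_pos[of I "\<lambda>i. q (y i)"] qpos by fastforce
  then have ppos: "pmf p (y i) > 0" if "i \<in> I" for i
    using that I(1) by (intro factor_pos_if_prod_pos[where I=I and f="\<lambda>i. pmf p (y i)"]) auto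
  define x where "x i = pmf p (y i) / q (y i)" for i
  have "(\<Sum>i\<in>I. ln (q (y i))) \<le> (\<Sum>i\<in>I. ln (pmf p (y i)))"
    using le qpos ppos I(1) by (simp add: ln_prod[symmetric] prod_pos less_imp_neq[symmetric])
  moreover have "ln (x i) = ln (pmf p (y i)) - ln (q (y i))" if "i \<in> I" for i
    using qpos[OF that] ppos[OF that] by (simp add: x_def ln_div)
  then have "(\<Sum>i\<in>I. ln (x i)) = (\<Sum>i\<in>I. ln (pmf p (y i))) - (\<Sum>i\<in>I. ln (q (y i)))"
    by (simp add: sum_subtractf)
  ultimately have "0 \<le> (\<Sum>i\<in>I. ln (x i))" by simp
  moreover have "(\<Sum>i\<in>I. x i) = real (card I) * (\<Sum>b\<in>y ` I. pmf p b)"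
  proof -
    have "(\<Sum>i\<in>I. x i) = (\<Sum>b\<in>y ` I. real (card {i\<in>I. y i = b}) * (pmf p b / q b))"
      unfolding x_def using sum_by_fibres[OF I(1) _ subset_refl, where h="\<lambda>b. pmf p b / q b"] I by simp
    also have "\<dots> = (\<Sum>b\<in>y ` I. real (card I) * pmf p b)"
    proof (intro sum.cong refl)
      fix b assume "b \<in> y ` I"
      then have "q b > 0" using qpos by auto
      then show "real (card {i\<in>I. y i = b}) * (pmf p b / q b) = real (card I) * pmf p b"
        by (simp add: q_def zero_less_divide_iff)
    qed
    finally show ?thesis by (simp add: sum_distrib_left)
  qed
  moreover have "(\<Sum>b\<in>y ` I. pmf p b) \<le> 1" by (rule sum_pmf_le_1) (use I in simp)
  ultimately have "x i = 1"
    using I i qpos ppos by (intro eq_1_if_sum_ln_nonneg[of I x]) (auto simp: x_def mult_left_le)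
  then show ?thesis using qpos[OF i] by (simp add: x_def)
qed

lemma pmf_eq_empirical_if_likelihood_ge:
  fixes y :: "'i \<Rightarrow> 'b" and p :: "'b pmf"
  assumes I: "finite I" "I \<noteq> {}"
  defines "q \<equiv> \<lambda>b. real (card {i\<in>I. y i = b}) / real (card I)"
  assumes le: "(\<Prod>i\<in>I. q (y i)) \<le> (\<Prod>i\<in>I. pmf p (y i))"
  shows "pmf p b = q b"
proof -
  have peq: "pmf p b = q b" if "b \<in> y ` I" for b
    using that pmf_eq_empirical_on_sample_if_likelihood_ge[OF I le[unfolded q_def]]
    by (auto simp: q_def)
  have "(\<Sum>b\<in>y ` I. q b) = 1"
    using sum_by_fibres[OF I(1) _ subset_refl, where h="\<lambda>_. 1 / real (card I)"] I
    by (simp add: q_def)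
  then have sum_p: "(\<Sum>b\<in>y ` I. pmf p b) = 1" using peq by simp
  show ?thesis
  proof (cases "b \<in> y ` I")
    case False
    then have no_hits: "{i\<in>I. y i = b} = {}" by auto
    have "q b = 0" unfolding q_def no_hits by simp
    then show ?thesis using pmf_eq_0_if_sum_pmf_eq_1[OF _ sum_p False] I by simp
  qed (rule peq)
qed

lemma mle_eq_empirical_kernel:
  assumes mle: "is_mle nS nA n D Phat" and D: "data_in_range nS nA n D" and nS: "nS \<ge> 1"
    and V: "visits n D s a \<noteq> {}"
  shows "Phat s a = empirical_kernel n D s a"
proof (rule pmf_eqI)
  fix s'
  let ?V = "visits n D s a"
  let ?f = "\<lambda>P i. pmf (P (fst (D i)) (fst (snd (D i)))) (snd (snd (D i)))"
  have Phat: "is_kernel nS nA Phat" using mle by (simp add: is_mle_def)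
  have E: "is_kernel nS nA (empirical_kernel n D)" by (rule empirical_kernel_is_kernel[OF D nS])
  define P' where "P' s0 a0 = (if s0 = s \<and> a0 = a then empirical_kernel n D s a else Phat s0 a0)" for s0 a0
  have "is_kernel nS nA P'" using Phat E by (auto simp: is_kernel_def P'_def)
  then have lik_P': "likelihood n D P' \<le> likelihood n D Phat"
    using mle by (simp add: is_mle_def likelihood_def)
  have "likelihood n D (empirical_kernel n D) \<le> likelihood n D Phat"
    using mle E by (simp add: is_mle_def likelihood_def)
  then have "0 < likelihood n D Phat" using likelihood_empirical_kernel_pos[of n D] by linarith
  then have "0 < ?f Phat i" if "i < n" for i
    using that by (intro factor_pos_if_prod_pos[where I="{..<n}" and f="?f Phat"]) (auto simp: likelihood_def)
  then have rest_pos: "0 < (\<Prod>i\<in>{..<n} - ?V. ?f Phat i)" by (intro prod_pos) auto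
  have split: "likelihood n D P = (\<Prod>i\<in>{..<n} - ?V. ?f P i) * (\<Prod>i\<in>?V. ?f P i)" for P
    unfolding likelihood_def by (rule prod.subset_diff) (auto simp: visits_def)
  have "(\<Prod>i\<in>{..<n} - ?V. ?f P' i) = (\<Prod>i\<in>{..<n} - ?V. ?f Phat i)"
    by (rule prod.cong) (auto simp: P'_def visits_def sample_at_def)
  then have "(\<Prod>i\<in>?V. ?f P' i) \<le> (\<Prod>i\<in>?V. ?f Phat i)"
    using lik_P' rest_pos unfolding split by simp
  also have "(\<Prod>i\<in>?V. ?f P' i) = (\<Prod>i\<in>?V. real (card {j\<in>?V. snd (snd (D j)) = snd (snd (D i))}) / real (card ?V))"
    using V by (intro prod.cong refl) (auto simp: P'_def visits_def sample_at_def pmf_empirical_kernel)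
  also have "(\<Prod>i\<in>?V. ?f Phat i) = (\<Prod>i\<in>?V. pmf (Phat s a) (snd (snd (D i))))"
    by (intro prod.cong refl) (auto simp: visits_def sample_at_def)
  finally have "pmf (Phat s a) s' = real (card {i\<in>?V. snd (snd (D i)) = s'}) / real (card ?V)"
    using V by (intro pmf_eq_empirical_if_likelihood_ge) auto
  then show "pmf (Phat s a) s' = pmf (empirical_kernel n D s a) s'" using V by (simp add: pmf_empirical_kernel)
qed

section \<open>Version space\<close>

lemma l1_dist_nonneg: "0 \<le> l1_dist nS p q"
  unfolding l1_dist_def by (simp add: sum_nonneg)

lemma l1_dist_le_2: "l1_dist nS p q \<le> 2"
proof -
  have "l1_dist nS p q \<le> (\<Sum>x<nS. pmf p x) + (\<Sum>x<nS. pmf q x)"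
    unfolding l1_dist_def sum.distrib[symmetric] by (intro sum_mono) (simp add: abs_le_iff)
  also have "\<dots> \<le> 2" using sum_pmf_le_1[of "{..<nS}" p] sum_pmf_le_1[of "{..<nS}" q] by simp
  finally show ?thesis .
qed

lemma l1_dist_commute: "l1_dist nS p q = l1_dist nS q p"
  unfolding l1_dist_def by (simp add: abs_minus_commute)

lemma l1_dist_triangle: "l1_dist nS p r \<le> l1_dist nS p q + l1_dist nS q r"
  unfolding l1_dist_def sum.distrib[symmetric] by (intro sum_mono) linarith

lemma l1_dist_eq_twice_excess:
  assumes p: "set_pmf p \<subseteq> {..<nS}" and q: "set_pmf q \<subseteq> {..<nS}"
  defines "A \<equiv> {x\<in>{..<nS}. pmf p x \<le> pmf q x}"
  shows "l1_dist nS p q = 2 * (measure_pmf.prob q A - measure_pmf.prob p A)"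
proof -
  have A: "A \<subseteq> {..<nS}" by (auto simp: A_def)
  have split: "(\<Sum>x<nS. f x) = (\<Sum>x\<in>A. f x) + (\<Sum>x\<in>{..<nS} - A. f x)" for f :: "nat \<Rightarrow> real"
    using A by (simp add: sum.subset_diff)
  have "(\<Sum>x<nS. pmf q x - pmf p x) = 0"
    using sum_pmf_eq_1[OF _ p] sum_pmf_eq_1[OF _ q] by (simp add: sum_subtractf)
  then have rest: "(\<Sum>x\<in>{..<nS} - A. pmf p x - pmf q x) = (\<Sum>x\<in>A. pmf q x - pmf p x)"
    unfolding split by (simp add: sum_subtractf)
  have "l1_dist nS p q = (\<Sum>x\<in>A. pmf q x - pmf p x) + (\<Sum>x\<in>{..<nS} - A. pmf p x - pmf q x)"
    unfolding l1_dist_def split by (intro arg_cong2[where f="(+)"] sum.cong refl) (auto simp: A_def)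
  also have "\<dots> = 2 * (\<Sum>x\<in>A. pmf q x - pmf p x)" by (simp add: rest)
  also have "(\<Sum>x\<in>A. pmf q x - pmf p x) = measure_pmf.prob q A - measure_pmf.prob p A"
    using A by (simp add: measure_measure_pmf_finite finite_subset sum_subtractf)
  finally show ?thesis .
qed

lemma emp_avg_state_action:
  assumes "data_in_range nS nA n D"
  shows "emp_avg n D (\<lambda>(s, a, s'). h s a) =
    (\<Sum>(s, a)\<in>{..<nS} \<times> {..<nA}. real (card (visits n D s a)) * h s a) / real n"
proof -
  let ?g = "\<lambda>i. (fst (D i), fst (snd (D i)))"
  have "?g ` {..<n} \<subseteq> {..<nS} \<times> {..<nA}" using assms by (auto simp: data_in_range_def)
  then have "(\<Sum>i<n. h (fst (?g i)) (snd (?g i)))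
      = (\<Sum>x\<in>{..<nS} \<times> {..<nA}. real (card {i\<in>{..<n}. ?g i = x}) * h (fst x) (snd x))"
    by (intro sum_by_fibres) auto
  also have "\<dots> = (\<Sum>(s, a)\<in>{..<nS} \<times> {..<nA}. real (card (visits n D s a)) * h s a)"
    by (intro sum.cong refl) (auto simp: visits_def sample_at_def prod_eq_iff)
  finally show ?thesis by (simp add: emp_avg_def case_prod_beta)
qed

lemma deviation_eq_card_times_measure_diff:
  assumes V: "visits n D s a \<noteq> {}"
  shows "deviation n Pstar D s a A = real (card (visits n D s a)) *
    (measure_pmf.prob (empirical_kernel n D s a) A - measure_pmf.prob (Pstar s a) A)"
proof -
  let ?V = "visits n D s a"
  have "(\<Sum>i\<in>?V. indicator A (snd (snd (D i))) :: real) = real (card {i\<in>?V. snd (snd (D i)) \<in> A})"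
    by (simp add: indicator_def sum.If_cases Int_def conj_commute)
  moreover have "card ?V > 0" using V by (simp add: card_gt_0_iff)
  ultimately show ?thesis
    using V by (simp add: deviation_def measure_empirical_kernel sum_subtractf right_diff_distrib)
qed

text \<open>On the set where the empirical law exceeds \<open>P\<^sup>\<star>(s,a)\<close> the deviation is
  \<open>N\<close> times half the \<open>\<ell>\<^sub>1\<close> error, with \<open>N\<close> the number of visits.\<close>
lemma card_visits_l1_empirical_le:
  assumes Pstar: "is_kernel nS nA Pstar" and D: "data_in_range nS nA n D" and nS: "nS \<ge> 1"
    and s: "s < nS" and a: "a < nA" and V: "visits n D s a \<noteq> {}"
    and dev: "\<And>A. A \<subseteq> {..<nS} \<Longrightarrow> deviation n Pstar D s a A \<le> sqrt (real (card (visits n D s a)) * L / 2)"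
  shows "real (card (visits n D s a)) * (l1_dist nS (Pstar s a) (empirical_kernel n D s a))\<^sup>2 \<le> 2 * L"
proof -
  define N where "N = real (card (visits n D s a))"
  define A where "A = {x\<in>{..<nS}. pmf (Pstar s a) x \<le> pmf (empirical_kernel n D s a) x}"
  define T where "T = measure_pmf.prob (empirical_kernel n D s a) A - measure_pmf.prob (Pstar s a) A"
  have N: "N > 0" using V by (simp add: N_def card_gt_0_iff)
  have l1: "l1_dist nS (Pstar s a) (empirical_kernel n D s a) = 2 * T"
    unfolding T_def A_def using Pstar empirical_kernel_is_kernel[OF D nS] s a
    by (intro l1_dist_eq_twice_excess) (auto simp: is_kernel_def)
  have "A \<subseteq> {..<nS}" by (auto simp: A_def)
  then have "deviation n Pstar D s a A \<le> sqrt (N * L / 2)" unfolding N_def by (rule dev)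
  then have "N * T \<le> sqrt (N * L / 2)"
    using deviation_eq_card_times_measure_diff[OF V, of Pstar A] by (simp add: N_def T_def)
  moreover have "0 \<le> T" using l1 l1_dist_nonneg[of nS "Pstar s a" "empirical_kernel n D s a"] by simp
  ultimately have "(N * T)\<^sup>2 \<le> N * L / 2"
    using N by (metis mult_nonneg_nonneg less_imp_le power_mono real_sqrt_ge_0_iff
        real_sqrt_pow2 order_trans zero_le_power2)
  then have "N * (N * (2 * T)\<^sup>2) \<le> N * (2 * L)" by (simp add: power2_eq_square algebra_simps)
  then show ?thesis using N by (simp add: l1 N_def)
qed

section \<open>Regret on good data\<close>

lemma occupancy_nonneg: "0 \<le> occupancy H d0 P pol x"
  unfolding occupancy_def by (simp add: sum_nonneg)

lemma sum_occupancy_le_1: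
  assumes "finite I" and "H \<ge> 1"
  shows "(\<Sum>x\<in>I. occupancy H d0 P pol x) \<le> 1"
proof -
  have "(\<Sum>x\<in>I. occupancy H d0 P pol x) = (1 / real H) * (\<Sum>t<H. \<Sum>x\<in>I. pmf (sa_dist d0 P pol t) x)"
    unfolding occupancy_def by (simp add: sum_divide_distrib sum.swap[of _ I])
  also have "\<dots> \<le> (1 / real H) * (\<Sum>t<H. 1)"
    by (intro mult_left_mono sum_mono sum_pmf_le_1 assms) simp
  also have "\<dots> = 1" using assms by simp
  finally show ?thesis .
qed

lemma occupancy_le_concentrability:
  assumes occ: "\<forall>sa \<in> {..<nS} \<times> {..<nA}. occupancy H d0 P pol sa > 0 \<longrightarrow> pmf rho sa > 0"
    and x: "x \<in> {..<nS} \<times> {..<nA}"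
  shows "occupancy H d0 P pol x \<le> concentrability nS nA H d0 P pol rho * pmf rho x"
proof (cases "pmf rho x > 0")
  case True
  have "occupancy H d0 P pol x / pmf rho x \<le> concentrability nS nA H d0 P pol rho"
    unfolding concentrability_def by (rule Max_ge) (use x in auto)
  then show ?thesis using True by (simp add: field_simps)
next
  case False
  then show ?thesis using occ x occupancy_nonneg[of H d0 P pol x] by (force simp: order_less_le)
qed

lemma concentrability_nonneg:
  assumes "nS \<ge> 1" and "nA \<ge> 1"
  shows "0 \<le> concentrability nS nA H d0 P pol rho"
proof -
  have "occupancy H d0 P pol (0, 0) / pmf rho (0, 0) \<le> concentrability nS nA H d0 P pol rho"
    unfolding concentrability_def by (rule Max_ge) (use assms in auto)
  moreover have "0 \<le> occupancy H d0 P pol (0, 0) / pmf rho (0, 0)" by (simp add: occupancy_nonneg)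
  ultimately show ?thesis by linarith
qed

lemma sum_weighted_le_sqrt_concentrability:
  fixes w u rho :: "'a \<Rightarrow> real"
  assumes I: "finite I" and w0: "\<And>x. x \<in> I \<Longrightarrow> 0 \<le> w x" and w1: "(\<Sum>x\<in>I. w x) \<le> 1"
    and wC: "\<And>x. x \<in> I \<Longrightarrow> w x \<le> C * rho x"
  shows "(\<Sum>x\<in>I. w x * u x) \<le> sqrt (C * (\<Sum>x\<in>I. rho x * (u x)\<^sup>2))"
proof (rule real_le_rsqrt)
  have "(\<Sum>x\<in>I. w x * u x)\<^sup>2 = (\<Sum>x\<in>I. sqrt (w x) * (sqrt (w x) * u x))\<^sup>2"
    using w0 by (intro arg_cong[where f="\<lambda>t. t\<^sup>2"] sum.cong refl) (simp add: mult.assoc[symmetric])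
  also have "\<dots> \<le> (\<Sum>x\<in>I. (sqrt (w x))\<^sup>2) * (\<Sum>x\<in>I. (sqrt (w x) * u x)\<^sup>2)"
    by (rule Cauchy_Schwarz_ineq_sum)
  also have "\<dots> = (\<Sum>x\<in>I. w x) * (\<Sum>x\<in>I. w x * (u x)\<^sup>2)"
    using w0 by (intro arg_cong2[where f="(*)"] sum.cong refl) (simp_all add: power_mult_distrib)
  also have "\<dots> \<le> (\<Sum>x\<in>I. w x * (u x)\<^sup>2)"
    using w0 w1 by (intro mult_left_le_one_le sum_nonneg sum_nonneg) auto
  also have "\<dots> \<le> (\<Sum>x\<in>I. C * rho x * (u x)\<^sup>2)"
    using wC by (intro sum_mono mult_right_mono) auto
  also have "\<dots> = C * (\<Sum>x\<in>I. rho x * (u x)\<^sup>2)" by (simp add: sum_distrib_left mult.assoc)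
  finally show "(\<Sum>x\<in>I. w x * u x)\<^sup>2 \<le> C * (\<Sum>x\<in>I. rho x * (u x)\<^sup>2)" .
qed

lemma card_weighted_error_le_of_version_space:
  assumes "data_in_range nS nA n D" and "n \<ge> 1" and "P \<in> version_space nS nA n D Phat xi"
  shows "(\<Sum>(s, a)\<in>{..<nS} \<times> {..<nA}. real (card (visits n D s a)) * (l1_dist nS (P s a) (Phat s a))\<^sup>2)
    \<le> real n * xi"
  using assms emp_avg_state_action[OF assms(1), of "\<lambda>s a. (l1_dist nS (P s a) (Phat s a))\<^sup>2"]
  by (simp add: version_space_def field_simps)

lemma card_weighted_error_le:
  assumes D: "data_in_range nS nA n D" and n: "n \<ge> 1"
    and P: "P \<in> version_space nS nA n D Phat xi" and Q: "Q \<in> version_space nS nA n D Phat xi"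
  shows "(\<Sum>(s, a)\<in>{..<nS} \<times> {..<nA}. real (card (visits n D s a)) * (l1_dist nS (P s a) (Q s a))\<^sup>2)
    \<le> 4 * real n * xi"
proof -
  let ?N = "\<lambda>s a. real (card (visits n D s a))"
  let ?e = "\<lambda>P s a. (l1_dist nS (P s a) (Phat s a))\<^sup>2"
  have sq_err: "(l1_dist nS (P s a) (Q s a))\<^sup>2 \<le> 2 * ?e P s a + 2 * ?e Q s a" for s a
  proof -
    have "l1_dist nS (P s a) (Q s a) \<le> l1_dist nS (P s a) (Phat s a) + l1_dist nS (Q s a) (Phat s a)"
      using l1_dist_triangle[of nS "P s a" "Q s a" "Phat s a"] by (simp add: l1_dist_commute)
    then have "(l1_dist nS (P s a) (Q s a))\<^sup>2 \<le> (l1_dist nS (P s a) (Phat s a) + l1_dist nS (Q s a) (Phat s a))\<^sup>2"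
      by (intro power_mono l1_dist_nonneg)
    also have "\<dots> \<le> 2 * ?e P s a + 2 * ?e Q s a"
      using sum_squares_bound[of "l1_dist nS (P s a) (Phat s a)" "l1_dist nS (Q s a) (Phat s a)"]
      by (simp add: power2_sum)
    finally show ?thesis .
  qed
  have "(\<Sum>(s, a)\<in>{..<nS} \<times> {..<nA}. ?N s a * (l1_dist nS (P s a) (Q s a))\<^sup>2)
      \<le> (\<Sum>(s, a)\<in>{..<nS} \<times> {..<nA}. 2 * (?N s a * ?e P s a) + 2 * (?N s a * ?e Q s a))"
  proof (intro sum_mono, clarify)
    fix s a
    have "?N s a * (l1_dist nS (P s a) (Q s a))\<^sup>2 \<le> ?N s a * (2 * ?e P s a + 2 * ?e Q s a)"
      by (intro mult_left_mono sq_err) simp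
    then show "?N s a * (l1_dist nS (P s a) (Q s a))\<^sup>2 \<le> 2 * (?N s a * ?e P s a) + 2 * (?N s a * ?e Q s a)"
      by (simp add: algebra_simps)
  qed
  also have "\<dots> = 2 * (\<Sum>(s, a)\<in>{..<nS} \<times> {..<nA}. ?N s a * ?e P s a)
      + 2 * (\<Sum>(s, a)\<in>{..<nS} \<times> {..<nA}. ?N s a * ?e Q s a)"
    by (simp add: sum.distrib sum_distrib_left case_prod_beta)
  also have "\<dots> \<le> 4 * real n * xi"
    using card_weighted_error_le_of_version_space[OF D n P] card_weighted_error_le_of_version_space[OF D n Q]
    by simp
  finally show ?thesis .
qed

text \<open>Pairs charged by \<open>rho\<close> with mass above \<open>10 L / n\<close> are visited at least
  \<open>n rho / 2\<close> times; the others contribute at most \<open>4 \<cdot> 10 L / n\<close> each.\<close>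
lemma rho_weighted_le_card_weighted:
  assumes n: "n \<ge> 1" and L: "0 \<le> L" and good: "good_data nS nA n rho Pstar L D"
    and u: "\<And>s a. 0 \<le> u s a" "\<And>s a. u s a \<le> 2"
  shows "(\<Sum>(s, a)\<in>{..<nS} \<times> {..<nA}. pmf rho (s, a) * (u s a)\<^sup>2)
    \<le> 2 / real n * (\<Sum>(s, a)\<in>{..<nS} \<times> {..<nA}. real (card (visits n D s a)) * (u s a)\<^sup>2)
      + 40 * real nS * real nA * L / real n"
proof -
  have n0: "real n > 0" using n by simp
  have "pmf rho (s, a) * (u s a)\<^sup>2 \<le> 2 / real n * (real (card (visits n D s a)) * (u s a)\<^sup>2) + 40 * L / real n"
    if "s < nS" "a < nA" for s a
  proof (cases "10 * L < real n * pmf rho (s, a)")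
    case True
    then have "pmf rho (s, a) \<le> 2 / real n * real (card (visits n D s a))"
      using good that n0 by (simp add: good_data_def field_simps)
    then have "pmf rho (s, a) * (u s a)\<^sup>2 \<le> 2 / real n * real (card (visits n D s a)) * (u s a)\<^sup>2"
      by (intro mult_right_mono) auto
    moreover have "0 \<le> 40 * L / real n" using L by simp
    ultimately show ?thesis by (simp add: mult.assoc)
  next
    case False
    then have "pmf rho (s, a) \<le> 10 * L / real n" using n0 by (simp add: field_simps)
    moreover have "(u s a)\<^sup>2 \<le> 2\<^sup>2" using u by (intro power_mono)
    ultimately have "pmf rho (s, a) * (u s a)\<^sup>2 \<le> 10 * L / real n * 4"
      using L n0 by (intro mult_mono) auto
    moreover have "0 \<le> 2 / real n * (real (card (visits n D s a)) * (u s a)\<^sup>2)" by simp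
    ultimately show ?thesis by linarith
  qed
  then have "(\<Sum>(s, a)\<in>{..<nS} \<times> {..<nA}. pmf rho (s, a) * (u s a)\<^sup>2)
      \<le> (\<Sum>(s, a)\<in>{..<nS} \<times> {..<nA}. 2 / real n * (real (card (visits n D s a)) * (u s a)\<^sup>2) + 40 * L / real n)"
    by (intro sum_mono) auto
  also have "\<dots> = 2 / real n * (\<Sum>(s, a)\<in>{..<nS} \<times> {..<nA}. real (card (visits n D s a)) * (u s a)\<^sup>2)
      + 40 * real nS * real nA * L / real n"
    by (simp add: sum.distrib sum_distrib_left case_prod_beta)
  finally show ?thesis .
qed

lemma true_kernel_in_version_space:
  assumes mle: "is_mle nS nA n D Phat" and D: "data_in_range nS nA n D" and nS: "nS \<ge> 1"
    and Pstar: "is_kernel nS nA Pstar" and good: "good_data nS nA n rho Pstar L D"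
    and L: "0 \<le> L" and xi: "2 * real nS * real nA * L / real n \<le> xi"
  shows "Pstar \<in> version_space nS nA n D Phat xi"
proof -
  have err: "real (card (visits n D s a)) * (l1_dist nS (Pstar s a) (Phat s a))\<^sup>2 \<le> 2 * L"
    if "s < nS" "a < nA" for s a
  proof (cases "visits n D s a = {}")
    case False
    have "real (card (visits n D s a)) * (l1_dist nS (Pstar s a) (empirical_kernel n D s a))\<^sup>2 \<le> 2 * L"
      using good that False
      by (intro card_visits_l1_empirical_le[OF Pstar D nS that False]) (auto simp: good_data_def)
    then show ?thesis by (simp add: mle_eq_empirical_kernel[OF mle D nS False])
  qed (simp add: L)
  have "emp_avg n D (\<lambda>(s, a, s'). (l1_dist nS (Pstar s a) (Phat s a))\<^sup>2)
      \<le> (\<Sum>(s, a)\<in>{..<nS} \<times> {..<nA}. 2 * L) / real n"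
    unfolding emp_avg_state_action[OF D] by (intro divide_right_mono sum_mono) (auto simp: err)
  also have "\<dots> \<le> xi" using xi by (simp add: mult_ac)
  finally show ?thesis using Pstar by (simp add: version_space_def)
qed

text \<open>Pessimism, applied with \<open>m0\<close> the true model, \<open>M\<close> the version space, and \<open>f\<close>, \<open>g\<close>
  the values of the comparator and of the selected policy.\<close>
lemma pessimism_regret_le:
  fixes f g :: "'m \<Rightarrow> real"
  assumes m0: "m0 \<in> M" and f: "\<And>m. m \<in> M \<Longrightarrow> f m0 - f m \<le> B"
    and g: "\<And>m. m \<in> M \<Longrightarrow> 0 \<le> g m" and opt: "(INF m\<in>M. f m) \<le> (INF m\<in>M. g m)"
  shows "f m0 - g m0 \<le> B"
proof -
  have "f m0 - B \<le> (INF m\<in>M. f m)" using m0 f by (intro cINF_greatest) force+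
  also note opt
  also have "(INF m\<in>M. g m) \<le> g m0" using g m0 by (intro cINF_lower bdd_belowI2) auto
  finally show ?thesis by simp
qed

lemma value_gap_le_of_version_space:
  assumes nS: "nS \<ge> 1" and nA: "nA \<ge> 1" and H: "H \<ge> 1" and n: "n \<ge> 1"
    and r: "\<forall>s a. s < nS \<longrightarrow> a < nA \<longrightarrow> 0 \<le> r s a \<and> r s a \<le> 1"
    and d0: "set_pmf d0 \<subseteq> {..<nS}" and Pstar: "is_kernel nS nA Pstar"
    and pistar: "is_policy nS nA pistar"
    and occ: "\<forall>sa \<in> {..<nS} \<times> {..<nA}. occupancy H d0 Pstar pistar sa > 0 \<longrightarrow> pmf rho sa > 0"
    and D: "data_in_range nS nA n D" and good: "good_data nS nA n rho Pstar L D" and L: "0 \<le> L"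
    and Pstar_in: "Pstar \<in> version_space nS nA n D Phat xi"
    and P: "P \<in> version_space nS nA n D Phat xi"
  shows "value_fn H r d0 Pstar pistar - value_fn H r d0 P pistar
    \<le> real H ^ 2 * sqrt (concentrability nS nA H d0 Pstar pistar rho *
         (8 * xi + 40 * real nS * real nA * L / real n))"
proof -
  let ?X = "{..<nS} \<times> {..<nA}"
  let ?C = "concentrability nS nA H d0 Pstar pistar rho"
  have P_kernel: "is_kernel nS nA P" using P by (simp add: version_space_def)
  define u where "u s a = l1_dist nS (Pstar s a) (P s a)" for s a
  have "(\<Sum>(s, a)\<in>?X. pmf rho (s, a) * (u s a)\<^sup>2)
      \<le> 2 / real n * (\<Sum>(s, a)\<in>?X. real (card (visits n D s a)) * (u s a)\<^sup>2)
        + 40 * real nS * real nA * L / real n"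
    unfolding u_def by (intro rho_weighted_le_card_weighted[OF n L good] l1_dist_nonneg l1_dist_le_2)
  also have "\<dots> \<le> 2 / real n * (4 * real n * xi) + 40 * real nS * real nA * L / real n"
    unfolding u_def by (intro add_right_mono mult_left_mono card_weighted_error_le[OF D n Pstar_in P]) simp
  also have "\<dots> = 8 * xi + 40 * real nS * real nA * L / real n" using n by simp
  finally have rho_err: "(\<Sum>(s, a)\<in>?X. pmf rho (s, a) * (u s a)\<^sup>2)
      \<le> 8 * xi + 40 * real nS * real nA * L / real n" .
  have "value_fn H r d0 Pstar pistar - value_fn H r d0 P pistar
      \<le> real H ^ 2 * (\<Sum>(s, a)\<in>?X. occupancy H d0 Pstar pistar (s, a) * u s a)"
    unfolding u_def by (rule value_diff_le_occupancy_l1[OF d0 Pstar P_kernel pistar r H])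
  also have "\<dots> \<le> real H ^ 2 * sqrt (?C * (\<Sum>(s, a)\<in>?X. pmf rho (s, a) * (u s a)\<^sup>2))"
    using sum_weighted_le_sqrt_concentrability[of ?X "occupancy H d0 Pstar pistar" ?C "pmf rho"
        "\<lambda>x. u (fst x) (snd x)"]
    by (intro mult_left_mono)
       (auto simp: case_prod_beta occupancy_nonneg sum_occupancy_le_1[OF _ H]
        occupancy_le_concentrability[OF occ])
  also have "\<dots> \<le> real H ^ 2 * sqrt (?C * (8 * xi + 40 * real nS * real nA * L / real n))"
    using concentrability_nonneg[OF nS nA] rho_err
    by (intro mult_left_mono real_sqrt_le_mono mult_left_mono) auto
  finally show ?thesis .
qed

lemma regret_le_of_good_data:
  assumes nS: "nS \<ge> 1" and nA: "nA \<ge> 1" and H: "H \<ge> 1" and n: "n \<ge> 1"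
    and r: "\<forall>s a. s < nS \<longrightarrow> a < nA \<longrightarrow> 0 \<le> r s a \<and> r s a \<le> 1"
    and d0: "set_pmf d0 \<subseteq> {..<nS}" and Pstar: "is_kernel nS nA Pstar"
    and pistar: "is_policy nS nA pistar"
    and occ: "\<forall>sa \<in> {..<nS} \<times> {..<nA}. occupancy H d0 Pstar pistar sa > 0 \<longrightarrow> pmf rho sa > 0"
    and D: "data_in_range nS nA n D" and good: "good_data nS nA n rho Pstar L D" and L: "0 \<le> L"
    and xi: "2 * real nS * real nA * L / real n \<le> xi"
    and out: "is_cppo_output nS nA H r d0 n D xi pihat"
  shows "value_fn H r d0 Pstar pistar - value_fn H r d0 Pstar pihat
    \<le> real H ^ 2 * sqrt (concentrability nS nA H d0 Pstar pistar rho *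
         (8 * xi + 40 * real nS * real nA * L / real n))"
proof -
  obtain Phat where mle: "is_mle nS nA n D Phat" and pihat: "is_policy nS nA pihat"
    and opt: "(INF P\<in>version_space nS nA n D Phat xi. value_fn H r d0 P pistar)
           \<le> (INF P\<in>version_space nS nA n D Phat xi. value_fn H r d0 P pihat)"
    using out pistar unfolding is_cppo_output_def by blast
  have Pstar_in: "Pstar \<in> version_space nS nA n D Phat xi"
    by (rule true_kernel_in_version_space[OF mle D nS Pstar good L xi])
  show ?thesis
  proof (rule pessimism_regret_le[OF Pstar_in _ _ opt])
    fix P assume "P \<in> version_space nS nA n D Phat xi"
    then show "value_fn H r d0 Pstar pistar - value_fn H r d0 P pistar
        \<le> real H ^ 2 * sqrt (concentrability nS nA H d0 Pstar pistar rho *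
             (8 * xi + 40 * real nS * real nA * L / real n))"
      by (rule value_gap_le_of_version_space[OF nS nA H n r d0 Pstar pistar occ D good L Pstar_in])
  next
    fix P assume "P \<in> version_space nS nA n D Phat xi"
    then show "0 \<le> value_fn H r d0 P pihat"
      by (intro value_fn_nonneg[OF d0 _ pihat r]) (simp add: version_space_def)
  qed
qed

section \<open>Choice of the constants\<close>

lemma ln_plus_card_ln_2_le:
  assumes "nS \<ge> 1" and "ln 2 \<le> l"
  shows "l + real nS * ln 2 \<le> 2 * real nS * l"
proof -
  have "0 \<le> l" using assms(2) ln_ge_zero[of 2] by linarith
  then have "1 * l \<le> real nS * l" using assms(1) by (intro mult_right_mono) auto
  moreover have "real nS * ln 2 \<le> real nS * l" using assms(2) by (intro mult_left_mono) auto
  ultimately show ?thesis by linarith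
qed

lemma failure_prob_le:
  assumes "nS \<ge> 1" and "nA \<ge> 1" and "n \<ge> 1" and "\<delta> > 0"
  shows "real nS * real nA * (1 + 2 ^ nS * real n)
      * exp (- (ln (real n * real nS * real nA * 2 / \<delta>) + real nS * ln 2)) \<le> \<delta>"
proof -
  define x where "x = real n * real nS * real nA * 2 / \<delta>"
  have "x > 0" using assms by (simp add: x_def)
  then have "exp (ln x + real nS * ln 2) = x * 2 ^ nS" by (simp add: exp_add exp_of_nat_mult)
  then have "exp (- (ln x + real nS * ln 2)) = 1 / (x * 2 ^ nS)"
    by (subst exp_minus) (simp add: inverse_eq_divide)
  then have "real nS * real nA * (1 + 2 ^ nS * real n) * exp (- (ln x + real nS * ln 2))
      = \<delta> * ((1 + 2 ^ nS * real n) / (2 * (2 ^ nS * real n)))"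
    using assms by (simp add: x_def field_simps)
  also have "\<dots> \<le> \<delta>"
  proof -
    have "1 * 1 \<le> real n * (2::real) ^ nS" using assms by (intro mult_mono) auto
    then show ?thesis using assms by (intro mult_left_le) auto
  qed
  finally show ?thesis by (simp add: x_def)
qed

lemma regret_radius_le:
  assumes nS: "nS \<ge> 1" and C: "0 \<le> C" and l: "ln 2 \<le> l" and n: "n \<ge> 1"
  shows "real H ^ 2 * sqrt (C * (8 * (4 * real nS ^ 2 * real nA * l / real n)
      + 40 * real nS * real nA * (l + real nS * ln 2) / real n))
    \<le> 11 * real H ^ 2 * sqrt (C * real nS ^ 2 * real nA * l / real n)"
proof -
  define K where "K = real nS * real nA / real n"
  define Z where "Z = real nS ^ 2 * real nA * l / real n"
  have K: "0 \<le> K" by (simp add: K_def)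
  have "0 < ln (2::real)" by simp
  then have "0 \<le> l" using l by linarith
  then have Z: "0 \<le> Z" by (simp add: Z_def)
  have "8 * (4 * real nS ^ 2 * real nA * l / real n) + 40 * real nS * real nA * (l + real nS * ln 2) / real n
      = K * (32 * real nS * l + 40 * (l + real nS * ln 2))"
    using n by (simp add: K_def power2_eq_square field_simps)
  also have "\<dots> \<le> K * (112 * (real nS * l))"
  proof (intro mult_left_mono K)
    have "l + real nS * ln 2 \<le> 2 * (real nS * l)"
      using ln_plus_card_ln_2_le[OF nS l] by (simp add: mult.assoc)
    then show "32 * real nS * l + 40 * (l + real nS * ln 2) \<le> 112 * (real nS * l)"
      by (simp add: algebra_simps)
  qed
  also have "\<dots> = 112 * Z" by (simp add: K_def Z_def power2_eq_square)
  finally have "sqrt (C * (8 * (4 * real nS ^ 2 * real nA * l / real n)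
      + 40 * real nS * real nA * (l + real nS * ln 2) / real n)) \<le> sqrt 112 * sqrt (C * Z)"
    using C by (simp add: real_sqrt_mult[symmetric] mult_left_mono mult.left_commute)
  also have "\<dots> \<le> 11 * sqrt (C * Z)"
    using C Z by (intro mult_right_mono real_le_lsqrt) auto
  finally have "real H ^ 2 * sqrt (C * (8 * (4 * real nS ^ 2 * real nA * l / real n)
      + 40 * real nS * real nA * (l + real nS * ln 2) / real n)) \<le> real H ^ 2 * (11 * sqrt (C * Z))"
    by (rule mult_left_mono) simp
  then show ?thesis by (simp add: Z_def mult_ac)
qed

lemma ln_2_le_ln_confidence:
  assumes "nS \<ge> 1" and "nA \<ge> 1" and "n \<ge> 1" and "0 < \<delta>" and "\<delta> < 1"
  shows "ln 2 \<le> ln (real n * real nS * real nA * 2 / \<delta>)"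
proof -
  have "1 * 1 * 1 \<le> real n * real nS * real nA" using assms by (intro mult_mono) auto
  then have "2 \<le> real n * real nS * real nA * 2" by simp
  also have "\<dots> \<le> real n * real nS * real nA * 2 / \<delta>"
    using assms by (simp add: le_divide_eq mult_left_le_one_le)
  finally show ?thesis by simp
qed

lemma radius_le_xi:
  assumes "nS \<ge> 1" and "ln 2 \<le> l"
  shows "2 * real nS * real nA * (l + real nS * ln 2) / real n \<le> 4 * real nS ^ 2 * real nA * l / real n"
proof -
  have "2 * real nS * real nA * (l + real nS * ln 2) \<le> 2 * real nS * real nA * (2 * real nS * l)"
    by (intro mult_left_mono ln_plus_card_ln_2_le assms) simp
  also have "\<dots> = 4 * real nS ^ 2 * real nA * l" by (simp add: power2_eq_square)
  finally show ?thesis by (rule divide_right_mono) simp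
qed

lemma prob_good_data_ge:
  assumes "L > 0" and "real nS * real nA * (1 + 2 ^ nS * real n) * exp (- L) \<le> \<delta>"
  shows "measure_pmf.prob (data_pmf n rho Pstar)
    {D \<in> set_pmf (data_pmf n rho Pstar). good_data nS nA n rho Pstar L D} \<ge> 1 - \<delta>"
proof -
  let ?M = "data_pmf n rho Pstar"
  let ?Good = "{D \<in> set_pmf ?M. good_data nS nA n rho Pstar L D}"
  have "- ?Good \<subseteq> - set_pmf ?M \<union> {D. \<not> good_data nS nA n rho Pstar L D}" by auto
  then have "measure_pmf.prob ?M (- ?Good)
      \<le> measure_pmf.prob ?M (- set_pmf ?M) + measure_pmf.prob ?M {D. \<not> good_data nS nA n rho Pstar L D}"
    by (intro order.trans[OF measure_pmf.finite_measure_mono measure_subadditive])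
       (auto simp: measure_pmf.emeasure_eq_measure)
  also have "\<dots> \<le> \<delta>"
    using prob_not_good_data_le[OF assms(1), of n rho Pstar nS nA] assms(2)
      measure_pmf_zero_iff[of ?M "- set_pmf ?M"] by simp
  finally show ?thesis using measure_pmf.prob_compl[of ?Good ?M] by (simp add: Compl_eq_Diff_UNIV)
qed

lemma prob_regret_le:
  fixes nS nA H n :: nat and \<delta> :: real
  assumes nS: "nS \<ge> 1" and nA: "nA \<ge> 1" and H: "H \<ge> 1" and n: "n \<ge> 1"
    and \<delta>: "0 < \<delta>" "\<delta> < 1"
    and r: "\<forall>s a. s < nS \<longrightarrow> a < nA \<longrightarrow> 0 \<le> r s a \<and> r s a \<le> 1"
    and d0: "set_pmf d0 \<subseteq> {..<nS}" and Pstar: "is_kernel nS nA Pstar"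
    and rho: "set_pmf rho \<subseteq> {..<nS} \<times> {..<nA}"
    and pistar: "is_policy nS nA pistar"
    and occ: "\<forall>sa \<in> {..<nS} \<times> {..<nA}. occupancy H d0 Pstar pistar sa > 0 \<longrightarrow> pmf rho sa > 0"
  shows "measure_pmf.prob (data_pmf n rho Pstar)
      {D. \<forall>pihat. is_cppo_output nS nA H r d0 n D
            (4 * real nS ^ 2 * real nA * ln (real n * real nS * real nA * 2 / \<delta>) / real n) pihat \<longrightarrow>
          value_fn H r d0 Pstar pistar - value_fn H r d0 Pstar pihat
          \<le> 11 * real H ^ 2 * sqrt (concentrability nS nA H d0 Pstar pistar rho *
               real nS ^ 2 * real nA * ln (real n * real nS * real nA * 2 / \<delta>) / real n)}
    \<ge> 1 - \<delta>" (is "measure_pmf.prob ?M ?Claim \<ge> _")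
proof -
  let ?l = "ln (real n * real nS * real nA * 2 / \<delta>)"
  define L where "L = ?l + real nS * ln 2"
  have l: "ln 2 \<le> ?l" by (rule ln_2_le_ln_confidence[OF nS nA n \<delta>])
  have "0 < ln (2::real)" by simp
  then have "0 < ?l" using l by linarith
  then have L: "0 < L" unfolding L_def by (intro add_pos_nonneg) auto
  have good: "{D \<in> set_pmf ?M. good_data nS nA n rho Pstar L D} \<subseteq> ?Claim"
  proof (intro subsetI CollectI allI impI)
    fix D pihat assume D: "D \<in> {D \<in> set_pmf ?M. good_data nS nA n rho Pstar L D}"
      and out: "is_cppo_output nS nA H r d0 n D (4 * real nS ^ 2 * real nA * ?l / real n) pihat"
    have "data_in_range nS nA n D" using D data_in_range_if_in_support[OF _ rho Pstar] by simp
    then have "value_fn H r d0 Pstar pistar - value_fn H r d0 Pstar pihat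
        \<le> real H ^ 2 * sqrt (concentrability nS nA H d0 Pstar pistar rho *
             (8 * (4 * real nS ^ 2 * real nA * ?l / real n) + 40 * real nS * real nA * L / real n))"
      using D L radius_le_xi[OF nS l, of nA n] unfolding L_def
      by (intro regret_le_of_good_data[OF nS nA H n r d0 Pstar pistar occ _ _ _ _ out]) auto
    also have "\<dots> \<le> 11 * real H ^ 2 *
        sqrt (concentrability nS nA H d0 Pstar pistar rho * real nS ^ 2 * real nA * ?l / real n)"
      unfolding L_def using concentrability_nonneg[OF nS nA] by (intro regret_radius_le[OF nS _ l n])
    finally show "value_fn H r d0 Pstar pistar - value_fn H r d0 Pstar pihat
        \<le> 11 * real H ^ 2 *
          sqrt (concentrability nS nA H d0 Pstar pistar rho * real nS ^ 2 * real nA * ?l / real n)" .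
  qed
  have "measure_pmf.prob ?M {D \<in> set_pmf ?M. good_data nS nA n rho Pstar L D} \<ge> 1 - \<delta>"
    by (rule prob_good_data_ge[OF L]) (unfold L_def, rule failure_prob_le[OF nS nA n \<delta>(1)])
  also have "\<dots> \<le> measure_pmf.prob ?M ?Claim"
    by (rule measure_pmf.finite_measure_mono[OF good]) simp
  finally show ?thesis .
qed

theorem corollary1:
  "\<exists>c1 c2 c3 c4 :: real. c1 > 0 \<and> c2 > 0 \<and> c3 > 0 \<and> c4 > 0 \<and>
    (\<forall>(nS::nat) (nA::nat) (H::nat) (n::nat) (\<delta>::real) r d0 Pstar rho pistar.
       nS \<ge> 1 \<longrightarrow> nA \<ge> 1 \<longrightarrow> H \<ge> 1 \<longrightarrow> n \<ge> 1 \<longrightarrow> 0 < \<delta> \<longrightarrow> \<delta> < 1 \<longrightarrow>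
       (\<forall>s a. s < nS \<longrightarrow> a < nA \<longrightarrow> 0 \<le> r s a \<and> r s a \<le> 1) \<longrightarrow>
       set_pmf d0 \<subseteq> {..<nS} \<longrightarrow>
       is_kernel nS nA Pstar \<longrightarrow>
       set_pmf rho \<subseteq> {..<nS} \<times> {..<nA} \<longrightarrow>
       is_policy nS nA pistar \<longrightarrow>
       (\<forall>sa \<in> {..<nS} \<times> {..<nA}. occupancy H d0 Pstar pistar sa > 0 \<longrightarrow> pmf rho sa > 0) \<longrightarrow>
       (let xi = c1 * real nS ^ 2 * real nA * ln (real n * real nS * real nA * c2 / \<delta>) / real n;
            C = concentrability nS nA H d0 Pstar pistar rho
        in measure_pmf.prob (data_pmf n rho Pstar)
             {D. \<forall>pihat. is_cppo_output nS nA H r d0 n D xi pihat \<longrightarrow>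
                   value_fn H r d0 Pstar pistar - value_fn H r d0 Pstar pihat
                   \<le> c3 * real H ^ 2 *
                      sqrt (C * real nS ^ 2 * real nA * ln (real n * real nS * real nA * c4 / \<delta>) / real n)}
           \<ge> 1 - \<delta>))"
  unfolding Let_def
  by (rule exI[where x=4], rule exI[where x=2], rule exI[where x=11], rule exI[where x=2])
     (simp add: prob_regret_le)

end
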